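(* Let $L$ be a linear forest with $k$ vertices and let $n$ be a positive integer. If $G$ and $G'$ are $n$-vertex graphs all of whose components are cycles with at least $k+1$ vertices, then $s(G,L)=s(G',L)$; that is, the number of induced copies of $L$ depends only on $L$ and $n$.
   Context: A linear forest is a disjoint union of paths. For graphs $G$ and $H$, $s(G,H)$ is the number of vertex subsets $X\subseteq V(G)$ such that $G[X]$ is isomorphic to $H$. *)

theory Defs
  imports Main
begin

definition simple_graph :: "'a set \<Rightarrow> 'a set set \<Rightarrow> bool" where
  "simple_graph V E \<longleftrightarrow> finite V \<and>
     (\<forall>e\<in>E. \<exists>u v. e = {u, v} \<and> u \<noteq> v \<and> u \<in> V \<and> v \<in> V)"

definition path_edges :: "'a list \<Rightarrow> 'a set set" where
  "path_edges xs = {{xs ! i, xs ! Suc i} | i. Suc i < length xs}"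

definition cycle_edges :: "'a list \<Rightarrow> 'a set set" where
  "cycle_edges xs = path_edges xs \<union> {{last xs, hd xs}}"

definition linear_forest :: "'a set \<Rightarrow> 'a set set \<Rightarrow> bool" where
  "linear_forest V E \<longleftrightarrow> simple_graph V E \<and>
     (\<exists>Ps :: 'a list set.
        (\<forall>p\<in>Ps. p \<noteq> [] \<and> distinct p) \<and>
        (\<forall>p\<in>Ps. \<forall>q\<in>Ps. p \<noteq> q \<longrightarrow> set p \<inter> set q = {}) \<and>
        V = (\<Union>p\<in>Ps. set p) \<and> E = (\<Union>p\<in>Ps. path_edges p))"

text \<open>A graph all of whose components are cycles, each with at least m vertices
  (and, being cycles of a simple graph, at least 3 vertices).\<close>
definition cycles_at_least :: "nat \<Rightarrow> 'a set \<Rightarrow> 'a set set \<Rightarrow> bool" where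
  "cycles_at_least m V E \<longleftrightarrow> simple_graph V E \<and>
     (\<exists>Cs :: 'a list set.
        (\<forall>c\<in>Cs. distinct c \<and> length c \<ge> 3 \<and> length c \<ge> m) \<and>
        (\<forall>c\<in>Cs. \<forall>d\<in>Cs. c \<noteq> d \<longrightarrow> set c \<inter> set d = {}) \<and>
        V = (\<Union>c\<in>Cs. set c) \<and> E = (\<Union>c\<in>Cs. cycle_edges c))"

definition induced_edges :: "'a set set \<Rightarrow> 'a set \<Rightarrow> 'a set set" where
  "induced_edges E X = {e \<in> E. e \<subseteq> X}"

definition graph_iso :: "'a set \<Rightarrow> 'a set set \<Rightarrow> 'b set \<Rightarrow> 'b set set \<Rightarrow> bool" where
  "graph_iso V1 E1 V2 E2 \<longleftrightarrow> (\<exists>f. bij_betw f V1 V2 \<and>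
     (\<forall>u\<in>V1. \<forall>v\<in>V1. {u, v} \<in> E1 \<longleftrightarrow> {f u, f v} \<in> E2))"

definition induced_count :: "'a set \<Rightarrow> 'a set set \<Rightarrow> 'b set \<Rightarrow> 'b set set \<Rightarrow> nat" where
  "induced_count V E VH EH = card {X. X \<subseteq> V \<and> graph_iso X (induced_edges E X) VH EH}"

end

theory Submission
  imports Defs "HOL-Library.FuncSet"
begin

text \<open>
  Every induced copy of \<open>L\<close> in \<open>G\<close> is the image of exactly \<open>|Aut L|\<close> induced embeddings, so it
  suffices to count induced embeddings of \<open>L\<close> into \<open>G\<close>. As every cycle of \<open>G\<close> is longer than \<open>L\<close>,
  such an embedding maps each path of \<open>L\<close>, traversed in one of its two directions, onto a segment of
  one cycle, and distinct paths go to disjoint, non-adjacent segments. Hence embeddings correspond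
  to orientations of the paths together with separated placements of segments of lengths
  \<open>a\<^sub>1, \<dots>, a\<^sub>t\<close> (summing to \<open>k\<close>) on the cycles. On one cycle of length \<open>m\<close> there are
  \<open>m (m - k - 1) (m - k - 2) \<dots> (m - k - t + 1)\<close> such placements: fixing the position of one segment
  leaves a line, where a falling factorial counts the placements. These numbers satisfy a
  Vandermonde-type convolution identity, so for the disjoint union \<open>G\<close> the count is the same
  expression with \<open>m = n\<close>, which depends only on \<open>n\<close>.
\<close>

section \<open>Falling factorials and a convolution identity\<close>

fun ffact :: "int \<Rightarrow> nat \<Rightarrow> int" where
  "ffact x 0 = 1"
| "ffact x (Suc k) = x * ffact (x - 1) k"

lemma ffact_Suc_right: "ffact x (Suc k) = ffact x k * (x - int k)"
proof (induction k arbitrary: x)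
  case 0 then show ?case by simp
next
  case (Suc k)
  have "ffact x (Suc (Suc k)) = x * (ffact (x - 1) k * (x - 1 - int k))"
    using Suc.IH[of "x - 1"] by simp
  then show ?case by (simp add: algebra_simps)
qed

lemma ffact_plus_one: "ffact (x + 1) (Suc k) = ffact x (Suc k) + int (Suc k) * ffact x k"
  using ffact_Suc_right[of x k] by (simp add: algebra_simps)

lemma ffact_eq_0: "0 \<le> x \<Longrightarrow> x < int k \<Longrightarrow> ffact x k = 0"
proof (induction k arbitrary: x)
  case (Suc k)
  then show ?case by (cases "x = 0") simp_all
qed simp

text \<open>The number of separated placements of the segments \<open>T\<close> on cycles of total length \<open>m\<close>.\<close>
definition cycle_placement_number :: "('i \<Rightarrow> nat) \<Rightarrow> 'i set \<Rightarrow> int \<Rightarrow> int" where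
  "cycle_placement_number a T m =
     (if T = {} then 1 else m * ffact (m - int (sum a T) - 1) (card T - 1))"

lemma cycle_placement_number_Diff:
  assumes fin: "finite T" and i: "i \<in> T" and k: "card T = Suc (Suc k)"
  shows "cycle_placement_number a (T - {i}) x = x * ffact (x + int (a i) - int (sum a T) - 1) k"
proof -
  have "T \<noteq> {i}" using k by auto
  then have "T - {i} \<noteq> {}" using i by auto
  moreover have "card (T - {i}) - 1 = k" using k i fin by simp
  moreover have "int (sum a (T - {i})) = int (sum a T) - int (a i)"
    using i fin by (simp add: sum_diff1_nat member_le_sum of_nat_diff)
  ultimately have "cycle_placement_number a (T - {i}) x = x * ffact (x - int (sum a (T - {i})) - 1) k"
    unfolding cycle_placement_number_def by simp
  also have "x - int (sum a (T - {i})) - 1 = x + int (a i) - int (sum a T) - 1"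
    unfolding \<open>int (sum a (T - {i})) = int (sum a T) - int (a i)\<close> by simp
  finally show ?thesis .
qed

lemma cycle_placement_number_diff:
  assumes fin: "finite T" and ne: "T \<noteq> {}"
  shows "cycle_placement_number a T m - cycle_placement_number a T (m - 1) =
    (\<Sum>i\<in>T. cycle_placement_number a (T - {i}) (m - int (a i) - 1))"
proof (cases "card T = 1")
  case True
  then obtain i where "T = {i}" using card_1_singletonE by blast
  then show ?thesis by (simp add: cycle_placement_number_def)
next
  case False
  define k where "k = card T - 2"
  have k: "card T = Suc (Suc k)"
  proof -
    have "card T \<noteq> 0" using fin ne by simp
    with False show ?thesis unfolding k_def by linarith
  qed
  define J where "J = int (sum a T)"
  have each: "cycle_placement_number a (T - {i}) (m - int (a i) - 1)
        = (m - int (a i) - 1) * ffact (m - J - 2) k"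
    if "i \<in> T" for i
    using cycle_placement_number_Diff[OF fin that k, of a "m - int (a i) - 1"] unfolding J_def
    by (simp add: algebra_simps)
  have "(\<Sum>i\<in>T. cycle_placement_number a (T - {i}) (m - int (a i) - 1))
      = (\<Sum>i\<in>T. (m - int (a i) - 1) * ffact (m - J - 2) k)"
    using each by simp
  also have "\<dots> = (\<Sum>i\<in>T. (m - 1) - int (a i)) * ffact (m - J - 2) k"
    unfolding sum_distrib_right by (intro sum.cong refl) (simp add: algebra_simps)
  also have "(\<Sum>i\<in>T. (m - 1) - int (a i)) = int (Suc (Suc k)) * (m - 1) - J"
    by (simp add: sum_subtractf J_def k)
  finally have R: "(\<Sum>i\<in>T. cycle_placement_number a (T - {i}) (m - int (a i) - 1))
      = (int (Suc (Suc k)) * (m - 1) - J) * ffact (m - J - 2) k" .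
  have "cycle_placement_number a T m = m * ffact (m - J - 1) (Suc k)"
    using ne k unfolding cycle_placement_number_def J_def by simp
  also have "\<dots> = m * (m - J - 1) * ffact (m - J - 2) k" by simp
  finally have L1: "cycle_placement_number a T m = m * (m - J - 1) * ffact (m - J - 2) k" .
  have "cycle_placement_number a T (m - 1) = (m - 1) * ffact (m - J - 2) (Suc k)"
    using ne k unfolding cycle_placement_number_def J_def by simp
  also have "\<dots> = (m - 1) * (m - J - 2 - int k) * ffact (m - J - 2) k"
    by (simp only: ffact_Suc_right mult_ac)
  finally have L2: "cycle_placement_number a T (m - 1)
        = (m - 1) * (m - J - 2 - int k) * ffact (m - J - 2) k" .
  show ?thesis unfolding R L1 L2 by (simp add: algebra_simps)
qed

lemma sum_Pow_Diff_swap: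
  assumes "finite T"
  shows "(\<Sum>S\<in>Pow T. \<Sum>i\<in>T - S. F S i) = (\<Sum>i\<in>T. \<Sum>S\<in>Pow (T - {i}). F S i)"
proof -
  have "(\<Sum>S\<in>Pow T. \<Sum>i\<in>{i\<in>T. i \<notin> S}. F S i) = (\<Sum>i\<in>T. \<Sum>S\<in>{S\<in>Pow T. i \<notin> S}. F S i)"
    using assms by (intro sum.swap_restrict) auto
  moreover have "{i\<in>T. i \<notin> S} = T - S" "{S\<in>Pow T. i \<notin> S} = Pow (T - {i})" for S i by auto
  ultimately show ?thesis by simp
qed

lemma placement_convolution_diff:
  assumes "finite T"
  shows "(\<Sum>S\<in>Pow T. f S * cycle_placement_number a (T - S) m)
       - (\<Sum>S\<in>Pow T. f S * cycle_placement_number a (T - S) (m - 1))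
     = (\<Sum>i\<in>T. \<Sum>S\<in>Pow (T - {i}). f S * cycle_placement_number a (T - {i} - S) (m - int (a i) - 1))"
proof -
  have "f S * (cycle_placement_number a (T - S) m - cycle_placement_number a (T - S) (m - 1))
      = (\<Sum>i\<in>T - S. f S * cycle_placement_number a (T - S - {i}) (m - int (a i) - 1))" for S
  proof (cases "T - S = {}")
    case True then show ?thesis unfolding True by (simp add: cycle_placement_number_def)
  next
    case False
    then show ?thesis
      using cycle_placement_number_diff[of "T - S" a m] assms by (simp add: sum_distrib_left)
  qed
  then have "(\<Sum>S\<in>Pow T. f S * cycle_placement_number a (T - S) m)
       - (\<Sum>S\<in>Pow T. f S * cycle_placement_number a (T - S) (m - 1))
     = (\<Sum>S\<in>Pow T. \<Sum>i\<in>T - S. f S * cycle_placement_number a (T - S - {i}) (m - int (a i) - 1))"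
    by (simp add: sum_subtractf[symmetric] right_diff_distrib)
  also have "\<dots> = (\<Sum>i\<in>T. \<Sum>S\<in>Pow (T - {i}).
          f S * cycle_placement_number a (T - S - {i}) (m - int (a i) - 1))"
    by (rule sum_Pow_Diff_swap[OF assms])
  also have "\<dots> = (\<Sum>i\<in>T. \<Sum>S\<in>Pow (T - {i}).
          f S * cycle_placement_number a (T - {i} - S) (m - int (a i) - 1))"
    by (intro sum.cong refl arg_cong2[where f = "(*)"]
        arg_cong2[where f = "cycle_placement_number a"]) auto
  finally show ?thesis .
qed

text \<open>Both sides, as functions of \<open>m2\<close>, have the same difference and agree at \<open>m2 = 0\<close>.\<close>
lemma cycle_placement_number_convolution:
  assumes "finite T"
  shows "(\<Sum>S\<in>Pow T. cycle_placement_number a S m1 * cycle_placement_number a (T - S) m2)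
       = cycle_placement_number a T (m1 + m2)"
  using assms
proof (induction "card T" arbitrary: T m2 rule: less_induct)
  case less
  show ?case
  proof (cases "T = {}")
    case True then show ?thesis by (simp add: cycle_placement_number_def)
  next
    case ne: False
    define h where "h x = (\<Sum>S\<in>Pow T. cycle_placement_number a S m1 * cycle_placement_number a (T - S) x)
      - cycle_placement_number a T (m1 + x)" for x
    have "(\<Sum>S\<in>Pow T. cycle_placement_number a S m1 * cycle_placement_number a (T - S) 0)
        = (\<Sum>S\<in>{T}. cycle_placement_number a S m1 * cycle_placement_number a (T - S) 0)"
      using less.prems by (intro sum.mono_neutral_right) (auto simp: cycle_placement_number_def)
    then have h0: "h 0 = 0" unfolding h_def by (simp add: cycle_placement_number_def)
    have step: "h x = h (x - 1)" for x
    proof -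
      have IH: "(\<Sum>S\<in>Pow (T - {i}). cycle_placement_number a S m1 *
              cycle_placement_number a (T - {i} - S) y)
          = cycle_placement_number a (T - {i}) (m1 + y)" if "i \<in> T" for i y
        using that less.prems card_Diff1_less[OF less.prems that] by (intro less.hyps) auto
      have "(\<Sum>S\<in>Pow T. cycle_placement_number a S m1 * cycle_placement_number a (T - S) x)
           - (\<Sum>S\<in>Pow T. cycle_placement_number a S m1 * cycle_placement_number a (T - S) (x - 1))
         = (\<Sum>i\<in>T. cycle_placement_number a (T - {i}) (m1 + (x - int (a i) - 1)))"
        unfolding placement_convolution_diff[OF less.prems] by (intro sum.cong refl IH)
      also have "\<dots> = cycle_placement_number a T (m1 + x) - cycle_placement_number a T (m1 + x - 1)"
        using cycle_placement_number_diff[OF less.prems ne, of a "m1 + x"]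
        by (simp add: add_diff_eq)
      finally show ?thesis unfolding h_def by (simp add: add_diff_eq)
    qed
    have "h m2 = 0"
    proof (rule int_induct[where k = 0, of "\<lambda>x. h x = 0"])
      fix i :: int assume "h i = 0"
      then show "h (i + 1) = 0" "h (i - 1) = 0" using step[of "i + 1"] step[of i] by simp_all
    qed (rule h0)
    then show ?thesis unfolding h_def by simp
  qed
qed

section \<open>Separated placements on a line\<close>

definition separated :: "int \<Rightarrow> nat \<Rightarrow> int \<Rightarrow> nat \<Rightarrow> bool" where
  "separated s a s' a' \<longleftrightarrow> (\<forall>t<a. \<forall>t'<a'. 1 < \<bar>s + int t - (s' + int t')\<bar>)"

text \<open>Segment \<open>i\<close> of length \<open>a i\<close> occupies the positions \<open>st i, \<dots>, st i + a i - 1\<close> of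
  \<open>{0..<u}\<close>; distinct segments are disjoint and non-adjacent.\<close>
definition line_placements :: "('i \<Rightarrow> nat) \<Rightarrow> int \<Rightarrow> 'i set \<Rightarrow> ('i \<Rightarrow> int) set" where
  "line_placements a u T = {st \<in> T \<rightarrow>\<^sub>E {0..<u}. (\<forall>i\<in>T. st i + int (a i) \<le> u) \<and>
      (\<forall>i\<in>T. \<forall>l\<in>T. i \<noteq> l \<longrightarrow> separated (st i) (a i) (st l) (a l))}"

lemma separated_add: "separated (s + c) a (s' + c) a' \<longleftrightarrow> separated s a s' a'"
  unfolding separated_def by (simp add: algebra_simps)

lemma separated_diff: "separated (s - c) a (s' - c) a' \<longleftrightarrow> separated s a s' a'"
  unfolding separated_def by (simp add: algebra_simps)

lemma separated_commute: "separated s a s' a' \<longleftrightarrow> separated s' a' s a"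
  unfolding separated_def by (auto simp: abs_minus_commute)

lemma separated_0_left:
  assumes "0 \<le> s" "1 \<le> a" "1 \<le> a'"
  shows "separated 0 a s a' \<longleftrightarrow> int a + 1 \<le> s"
proof
  assume sep: "separated 0 a s a'"
  show "int a + 1 \<le> s"
  proof (rule ccontr)
    assume "\<not> int a + 1 \<le> s"
    then have "nat (s - 1) < a" using assms by linarith
    then have "1 < \<bar>0 + int (nat (s - 1)) - (s + int 0)\<bar>"
      using sep[unfolded separated_def, rule_format, of "nat (s - 1)" 0] assms(3) by simp
    then show False using assms by linarith
  qed
qed (auto simp: separated_def)

lemma line_placements_iff:
  "st \<in> line_placements a u T \<longleftrightarrow> st \<in> extensional T \<and>
     (\<forall>i\<in>T. 0 \<le> st i \<and> st i < u \<and> st i + int (a i) \<le> u) \<and>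
     (\<forall>i\<in>T. \<forall>l\<in>T. i \<noteq> l \<longrightarrow> separated (st i) (a i) (st l) (a l))"
  unfolding line_placements_def by (auto simp: PiE_iff)

lemma restrict_eq_PiE: "st \<in> T \<rightarrow>\<^sub>E B \<Longrightarrow> (\<And>i. i \<in> T \<Longrightarrow> g i = st i) \<Longrightarrow> restrict g T = st"
  by (auto simp: PiE_iff extensional_def restrict_def fun_eq_iff)

lemma finite_line_placements: "finite T \<Longrightarrow> finite (line_placements a u T)"
  unfolding line_placements_def
  by (rule finite_subset[of _ "T \<rightarrow>\<^sub>E {0..<u}"]) (auto intro: finite_PiE)

lemma line_placements_neg: "line_placements a (-1) T = (if T = {} then {\<lambda>_. undefined} else {})"
  unfolding line_placements_def by (auto simp: PiE_eq_empty_iff)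

lemma line_placements_shift_bij:
  "bij_betw (\<lambda>st. restrict (\<lambda>i. st i - 1) T)
     {st \<in> line_placements a u T. \<forall>i\<in>T. 1 \<le> st i} (line_placements a (u - 1) T)"
proof (rule bij_betw_byWitness[where f' = "\<lambda>st. restrict (\<lambda>i. st i + 1) T"])
  show "\<forall>st\<in>{st \<in> line_placements a u T. \<forall>i\<in>T. 1 \<le> st i}.
        restrict (\<lambda>i. restrict (\<lambda>i. st i - 1) T i + 1) T = st"
    unfolding line_placements_def by (auto intro!: restrict_eq_PiE)
  show "\<forall>st\<in>line_placements a (u - 1) T. restrict (\<lambda>i. restrict (\<lambda>i. st i + 1) T i - 1) T = st"
    unfolding line_placements_def by (auto intro!: restrict_eq_PiE)
  show "(\<lambda>st. restrict (\<lambda>i. st i - 1) T) ` {st \<in> line_placements a u T. \<forall>i\<in>T. 1 \<le> st i}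
        \<subseteq> line_placements a (u - 1) T"
  proof clarify
    fix st assume st: "st \<in> line_placements a u T" "\<forall>i\<in>T. 1 \<le> st i"
    then have "0 \<le> st i - 1 \<and> st i - 1 < u - 1 \<and> st i - 1 + int (a i) \<le> u - 1" if "i \<in> T" for i
      using that unfolding line_placements_iff by fastforce
    with st(1) show "restrict (\<lambda>i. st i - 1) T \<in> line_placements a (u - 1) T"
      unfolding line_placements_iff by (simp add: separated_diff)
  qed
  show "(\<lambda>st. restrict (\<lambda>i. st i + 1) T) ` line_placements a (u - 1) T
        \<subseteq> {st \<in> line_placements a u T. \<forall>i\<in>T. 1 \<le> st i}"
  proof (rule image_subsetI)
    fix st assume st: "st \<in> line_placements a (u - 1) T"
    then have "1 \<le> st i + 1 \<and> st i + 1 < u \<and> st i + 1 + int (a i) \<le> u" if "i \<in> T" for i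
      using that unfolding line_placements_iff by fastforce
    with st show "restrict (\<lambda>i. st i + 1) T \<in> {st \<in> line_placements a u T. \<forall>i\<in>T. 1 \<le> st i}"
      unfolding line_placements_iff by (simp add: separated_add)
  qed
qed

lemma line_placement_gap:
  assumes st: "st \<in> line_placements a u T" and "i \<in> T" "l \<in> T" "l \<noteq> i" "st i = 0"
    and "1 \<le> a i" "1 \<le> a l"
  shows "int (a i) + 1 \<le> st l"
  using assms separated_0_left[of "st l" "a i" "a l"] unfolding line_placements_iff by metis

lemma line_placements_at_0_bij:
  assumes pos: "\<forall>l\<in>T. 1 \<le> a l" and i: "i \<in> T" "int (a i) \<le> u"
  defines "c \<equiv> int (a i) + 1"
  shows "bij_betw (\<lambda>st. restrict (\<lambda>l. st l - c) (T - {i}))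
     {st \<in> line_placements a u T. st i = 0} (line_placements a (u - c) (T - {i}))"
proof (rule bij_betw_byWitness[where f' = "\<lambda>st. restrict (\<lambda>l. if l = i then 0 else st l + c) T"])
  show "\<forall>st\<in>{st \<in> line_placements a u T. st i = 0}.
      restrict (\<lambda>l. if l = i then 0 else restrict (\<lambda>l. st l - c) (T - {i}) l + c) T = st"
    unfolding line_placements_def by (auto intro!: restrict_eq_PiE)
  show "\<forall>st\<in>line_placements a (u - c) (T - {i}).
      restrict (\<lambda>l. restrict (\<lambda>l. if l = i then 0 else st l + c) T l - c) (T - {i}) = st"
    unfolding line_placements_def by (auto intro!: restrict_eq_PiE)
  show "(\<lambda>st. restrict (\<lambda>l. st l - c) (T - {i})) ` {st \<in> line_placements a u T. st i = 0}
      \<subseteq> line_placements a (u - c) (T - {i})"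
  proof clarify
    fix st assume st: "st \<in> line_placements a u T" "st i = 0"
    have "c \<le> st l" if "l \<in> T" "l \<noteq> i" for l
      using line_placement_gap[OF st(1) i(1) that st(2)] pos i that unfolding c_def by auto
    then show "restrict (\<lambda>l. st l - c) (T - {i}) \<in> line_placements a (u - c) (T - {i})"
      using st separated_diff[of _ c] unfolding line_placements_iff by auto
  qed
  show "(\<lambda>st. restrict (\<lambda>l. if l = i then 0 else st l + c) T) ` line_placements a (u - c) (T - {i})
      \<subseteq> {st \<in> line_placements a u T. st i = 0}"
  proof (rule image_subsetI)
    fix st assume st: "st \<in> line_placements a (u - c) (T - {i})"
    define x where "x = restrict (\<lambda>l. if l = i then 0 else st l + c) T"
    have "c \<le> x l" if "l \<in> T" "l \<noteq> i" for l
      using st that unfolding x_def line_placements_iff by auto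
    then have "separated (x i) (a i) (x l) (a l)" if "l \<in> T" "l \<noteq> i" for l
      using that i pos separated_0_left[of "x l" "a i" "a l"] unfolding x_def c_def by auto
    moreover have "separated (x l) (a l) (x l') (a l')"
      if "l \<in> T" "l' \<in> T" "l \<noteq> i" "l' \<noteq> i" "l \<noteq> l'" for l l'
      using st that separated_add[of _ c] unfolding x_def line_placements_iff by auto
    moreover have "0 \<le> x l \<and> x l < u \<and> x l + int (a l) \<le> u" if "l \<in> T" for l
    proof (cases "l = i")
      case False
      with st that have "0 \<le> st l" "st l + int (a l) \<le> u - c"
        unfolding line_placements_iff by auto
      with False that pos show ?thesis unfolding x_def c_def by force
    qed (use i pos x_def in auto)
    ultimately show "x \<in> {st \<in> line_placements a u T. st i = 0}"
      using i unfolding line_placements_iff x_def by (auto simp: separated_commute)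
  qed
qed

text \<open>Classify placements by whether some segment starts at position \<open>0\<close>.\<close>
lemma card_line_placements_rec:
  assumes fin: "finite T" and pos: "\<forall>i\<in>T. 1 \<le> a i"
  shows "card (line_placements a u T) = card (line_placements a (u - 1) T) +
     (\<Sum>i\<in>{i\<in>T. int (a i) \<le> u}. card (line_placements a (u - int (a i) - 1) (T - {i})))"
proof -
  define A where "A = line_placements a u T"
  define A0 where "A0 = {st\<in>A. \<forall>i\<in>T. 1 \<le> st i}"
  define Ai where "Ai i = {st\<in>A. st i = 0}" for i
  define T' where "T' = {i\<in>T. int (a i) \<le> u}"
  have finA: "finite A" unfolding A_def using finite_line_placements[OF fin] .
  have cover: "A = A0 \<union> (\<Union>i\<in>T'. Ai i)"
  proof (intro equalityI subsetI)
    fix st assume st: "st \<in> A"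
    show "st \<in> A0 \<union> (\<Union>i\<in>T'. Ai i)"
    proof (cases "\<forall>i\<in>T. 1 \<le> st i")
      case False
      then obtain i where i: "i \<in> T" "st i < 1" by auto
      then have "st i = 0" "int (a i) \<le> u" using st unfolding A_def line_placements_iff by force+
      then show ?thesis using st i unfolding Ai_def T'_def by auto
    qed (use st in \<open>auto simp: A0_def\<close>)
  qed (auto simp: A0_def Ai_def)
  have disj: "Ai i \<inter> Ai l = {}" if "i \<in> T'" "l \<in> T'" "i \<noteq> l" for i l
  proof -
    have "st i \<noteq> 0 \<or> st l \<noteq> 0" if "st \<in> A" for st
    proof -
      have "separated (st i) (a i) (st l) (a l)" using that \<open>i \<in> T'\<close> \<open>l \<in> T'\<close> \<open>i \<noteq> l\<close>
        unfolding A_def line_placements_def T'_def by auto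
      moreover have "1 \<le> a i" "1 \<le> a l" using pos \<open>i \<in> T'\<close> \<open>l \<in> T'\<close> unfolding T'_def by auto
      ultimately show ?thesis unfolding separated_def by (auto dest!: spec[of _ 0])
    qed
    then show ?thesis unfolding Ai_def by auto
  qed
  have "A0 \<inter> (\<Union>i\<in>T'. Ai i) = {}"
    unfolding A0_def Ai_def T'_def by force
  then have "card A = card A0 + card (\<Union>i\<in>T'. Ai i)"
    using cover finA by (metis card_Un_disjoint finite_Un)
  also have "card (\<Union>i\<in>T'. Ai i) = (\<Sum>i\<in>T'. card (Ai i))"
    using fin finA disj unfolding Ai_def T'_def by (intro card_UN_disjoint) auto
  also have "card A0 = card (line_placements a (u - 1) T)"
    unfolding A0_def A_def by (rule bij_betw_same_card[OF line_placements_shift_bij])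
  also have "card (Ai i) = card (line_placements a (u - int (a i) - 1) (T - {i}))" if "i \<in> T'" for i
    using bij_betw_same_card[OF line_placements_at_0_bij[OF pos, of i u]] that
    unfolding Ai_def A_def T'_def by (simp add: diff_diff_add)
  then have "(\<Sum>i\<in>T'. card (Ai i)) = (\<Sum>i\<in>T'. card (line_placements a (u - int (a i) - 1) (T - {i})))"
    by (rule sum.cong[OF refl])
  finally show ?thesis unfolding A_def T'_def .
qed

text \<open>There are no placements when the segments do not fit, although \<open>ffact x k\<close> need not vanish
  for negative \<open>x\<close>.\<close>
definition trunc_ffact :: "int \<Rightarrow> nat \<Rightarrow> int" where
  "trunc_ffact x k = (if x < 0 then 0 else ffact x k)"

lemma trunc_ffact_rec:
  assumes "1 \<le> k \<or> 1 \<le> x" and c: "x \<ge> 1 \<Longrightarrow> c = k"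
  shows "trunc_ffact x k = trunc_ffact (x - 1) k + int c * trunc_ffact (x - 1) (k - 1)"
proof (cases k)
  case (Suc k')
  then show ?thesis
    using c ffact_plus_one[of "x - 1" k'] ffact_eq_0[of x k] unfolding trunc_ffact_def by auto
qed (use assms in \<open>simp add: trunc_ffact_def\<close>)

lemma card_line_placements_neg:
  assumes "finite T" "\<forall>i\<in>T. 1 \<le> a i"
  shows "int (card (line_placements a (-1) T)) = trunc_ffact (- int (sum a T)) (card T)"
proof (cases "T = {}")
  case False
  then obtain i where i: "i \<in> T" by blast
  then have "a i \<le> sum a T" using assms(1) by (intro member_le_sum) auto
  moreover have "1 \<le> a i" using assms(2) i by blast
  ultimately have "- int (sum a T) < 0" by linarith
  then show ?thesis using False by (simp add: line_placements_neg trunc_ffact_def)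
qed (simp add: line_placements_neg trunc_ffact_def)

text \<open>Appending a blank cell to each segment turns a placement into an unconstrained arrangement
  of blocks of lengths \<open>a i + 1\<close> in a line of \<open>n\<close> cells, whence the falling factorial.\<close>
lemma card_line_placements:
  assumes "finite T" "\<forall>i\<in>T. 1 \<le> a i"
  shows "int (card (line_placements a (int n - 1) T)) = trunc_ffact (int n - int (sum a T)) (card T)"
  using assms
proof (induction n arbitrary: T rule: less_induct)
  case (less n)
  show ?case
  proof (cases n)
    case 0
    then show ?thesis using card_line_placements_neg[OF less.prems] by simp
  next
    case (Suc n')
    define u where "u = int n'"
    define T' where "T' = {i\<in>T. int (a i) \<le> u}"
    have un: "int n - 1 = u" unfolding u_def Suc by simp
    have IH1: "int (card (line_placements a (u - 1) T))
          = trunc_ffact (int n - int (sum a T) - 1) (card T)"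
      using less.IH[of n' T] less.prems Suc u_def by (simp add: algebra_simps)
    have IH2: "int (card (line_placements a (u - int (a i) - 1) (T - {i})))
        = trunc_ffact (int n - int (sum a T) - 1) (card T - 1)" if "i \<in> T'" for i
    proof -
      have i: "i \<in> T" "a i \<le> n'" using that unfolding T'_def u_def by auto
      have "int (card (line_placements a (int (n' - a i) - 1) (T - {i})))
          = trunc_ffact (int (n' - a i) - int (sum a (T - {i}))) (card (T - {i}))"
        using less.prems i Suc by (intro less.IH) auto
      moreover have "int (n' - a i) - int (sum a (T - {i})) = int n - int (sum a T) - 1"
        using i less.prems(1) Suc by (simp add: sum_diff1_nat member_le_sum of_nat_diff)
      moreover have "int (n' - a i) - 1 = u - int (a i) - 1" using i u_def by simp
      moreover have "card (T - {i}) = card T - 1" using i less.prems(1) by simp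
      ultimately show ?thesis by (simp only:)
    qed
    have "int (card (line_placements a u T)) = int (card (line_placements a (u - 1) T))
        + (\<Sum>i\<in>T'. int (card (line_placements a (u - int (a i) - 1) (T - {i}))))"
      using card_line_placements_rec[OF less.prems, of u] unfolding T'_def by simp
    also have "\<dots> = trunc_ffact (int n - int (sum a T) - 1) (card T)
          + int (card T') * trunc_ffact (int n - int (sum a T) - 1) (card T - 1)"
      using IH1 IH2 by simp
    also have "\<dots> = trunc_ffact (int n - int (sum a T)) (card T)"
    proof (rule trunc_ffact_rec[symmetric])
      show "1 \<le> card T \<or> 1 \<le> int n - int (sum a T)"
        using less.prems Suc by (cases "T = {}") (auto simp: Suc_leI card_gt_0_iff)
      assume x: "1 \<le> int n - int (sum a T)"
      have "int (a i) \<le> u" if "i \<in> T" for i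
      proof -
        have "a i \<le> sum a T" using that less.prems(1) by (intro member_le_sum) auto
        then show ?thesis using x un by linarith
      qed
      then have "T' = T" unfolding T'_def by blast
      then show "card T' = card T" by simp
    qed
    finally show ?thesis using un by simp
  qed
qed

section \<open>Separated placements on cycles\<close>

definition separated_mod :: "int \<Rightarrow> int \<Rightarrow> nat \<Rightarrow> int \<Rightarrow> nat \<Rightarrow> bool" where
  "separated_mod m s a s' a' \<longleftrightarrow>
     (\<forall>t<a. \<forall>t'<a'. (s + int t - (s' + int t')) mod m \<notin> {0, 1, m - 1})"

definition cycle_placements :: "('i \<Rightarrow> nat) \<Rightarrow> int \<Rightarrow> 'i set \<Rightarrow> ('i \<Rightarrow> int) set" where
  "cycle_placements a m T = {st \<in> T \<rightarrow>\<^sub>E {0..<m}.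
     \<forall>i\<in>T. \<forall>l\<in>T. i \<noteq> l \<longrightarrow> separated_mod m (st i) (a i) (st l) (a l)}"

lemma mod_in_near_0_iff:
  fixes d m :: int
  assumes "\<bar>d\<bar> \<le> m - 2"
  shows "d mod m \<in> {0, 1, m - 1} \<longleftrightarrow> \<bar>d\<bar> \<le> 1"
proof (cases "d \<ge> 0")
  case True
  then have "d mod m = d" using assms by (intro mod_pos_pos_trivial) auto
  then show ?thesis using True assms by auto
next
  case False
  have "(d + m) mod m = d + m" using False assms by (intro mod_pos_pos_trivial) auto
  then show ?thesis using False assms by auto
qed

lemma separated_mod_cong:
  assumes "\<And>t t'. (x + int t - (y + int t')) mod m = (x' + int t - (y' + int t')) mod m"
  shows "separated_mod m x a y a' \<longleftrightarrow> separated_mod m x' a y' a'"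
  unfolding separated_mod_def using assms by simp

lemma separated_mod_mod: "separated_mod m (x mod m) a (y mod m) a' \<longleftrightarrow> separated_mod m x a y a'"
proof (rule separated_mod_cong)
  fix t t'
  have "x mod m + int t - (y mod m + int t') = (x + int t - (y + int t')) + (y div m - x div m) * m"
    using div_mult_mod_eq[of x m] div_mult_mod_eq[of y m] by (simp add: algebra_simps)
  then show "(x mod m + int t - (y mod m + int t')) mod m = (x + int t - (y + int t')) mod m"
    by (metis mod_mult_self1)
qed

lemma separated_mod_add: "separated_mod m (x + c) a (y + c) a' \<longleftrightarrow> separated_mod m x a y a'"
  by (rule separated_mod_cong) (simp add: algebra_simps)

lemma mod_uminus_in_near_0_iff:
  fixes d m :: int
  assumes "m > 0"
  shows "(- d) mod m \<in> {0, 1, m - 1} \<longleftrightarrow> d mod m \<in> {0, 1, m - 1}"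
    and "(- d) mod m \<in> {1, m - 1} \<longleftrightarrow> d mod m \<in> {1, m - 1}"
proof -
  have "(- d) mod m = (if d mod m = 0 then 0 else m - d mod m)"
    using assms by (simp add: zmod_zminus1_eq_if)
  moreover have "0 \<le> d mod m" "d mod m < m" using assms by auto
  ultimately show "(- d) mod m \<in> {0, 1, m - 1} \<longleftrightarrow> d mod m \<in> {0, 1, m - 1}"
    and "(- d) mod m \<in> {1, m - 1} \<longleftrightarrow> d mod m \<in> {1, m - 1}" by auto
qed

lemma separated_mod_commute:
  assumes "m > 0"
  shows "separated_mod m x a y a' \<longleftrightarrow> separated_mod m y a' x a"
proof -
  have "(y + int t' - (x + int t)) mod m \<in> {0, 1, m - 1}
      \<longleftrightarrow> (x + int t - (y + int t')) mod m \<in> {0, 1, m - 1}" for t t'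
    using mod_uminus_in_near_0_iff(1)[OF assms, of "x + int t - (y + int t')"]
    by (simp only: minus_diff_eq)
  then show ?thesis unfolding separated_mod_def by (metis (no_types))
qed

lemma separated_mod_0_left:
  assumes "0 \<le> s" "s < m" "1 \<le> a" "1 \<le> a'" "int a + int a' + 1 \<le> m"
  shows "separated_mod m 0 a s a' \<longleftrightarrow> int a + 1 \<le> s \<and> s + int a' \<le> m - 1"
proof
  assume sep: "separated_mod m 0 a s a'"
  have H: "(0 + int t - (s + int t')) mod m \<notin> {0, 1, m - 1}" if "t < a" "t' < a'" for t t'
    using sep[unfolded separated_mod_def, rule_format, OF that] .
  show "int a + 1 \<le> s \<and> s + int a' \<le> m - 1"
  proof (rule ccontr)
    assume "\<not> (int a + 1 \<le> s \<and> s + int a' \<le> m - 1)"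
    then consider "s \<le> int a" | "m \<le> s + int a'" by linarith
    then show False
    proof cases
      case 1
      then have "nat (s - 1) < a" using assms by linarith
      from H[OF this, of 0] have "(int (nat (s - 1)) - s) mod m \<notin> {0, 1, m - 1}"
        using assms by simp
      moreover have "int (nat (s - 1)) - s \<in> {0, -1}" using assms(1) by auto
      ultimately show False using assms by (auto simp: zmod_zminus1_eq_if)
    next
      case 2
      then have "nat (m - 1 - s) < a'" using assms by linarith
      from H[OF _ this, of 0] have "(1 - m) mod m \<notin> {0, 1, m - 1}"
        using assms by simp
      moreover have "(1 - m) mod m = 1"
        using mod_mult_self1[of 1 "-1" m] assms by simp
      ultimately show False by simp
    qed
  qed
next
  assume "int a + 1 \<le> s \<and> s + int a' \<le> m - 1"
  then show "separated_mod m 0 a s a'"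
    using mod_in_near_0_iff[of "int t - (s + int t')" m for t t'] unfolding separated_mod_def
    by auto
qed

lemma separated_mod_iff_separated:
  assumes "0 \<le> s" "s + int a < m" "0 \<le> s'" "s' + int a' < m"
  shows "separated_mod m s a s' a' \<longleftrightarrow> separated s a s' a'"
proof -
  have "\<bar>s + int t - (s' + int t')\<bar> \<le> m - 2" if "t < a" "t' < a'" for t t'
    using assms that by auto
  then show ?thesis unfolding separated_mod_def separated_def using mod_in_near_0_iff
    by (meson not_le)
qed

lemma finite_cycle_placements: "finite T \<Longrightarrow> finite (cycle_placements a m T)"
  unfolding cycle_placements_def
  by (rule finite_subset[of _ "T \<rightarrow>\<^sub>E {0..<m}"]) (auto intro: finite_PiE)

lemma cycle_placements_empty: "cycle_placements a m {} = {\<lambda>_. undefined}"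
  unfolding cycle_placements_def by auto

lemma cycle_placements_iff:
  "st \<in> cycle_placements a m T \<longleftrightarrow> st \<in> extensional T \<and> (\<forall>i\<in>T. 0 \<le> st i \<and> st i < m) \<and>
     (\<forall>i\<in>T. \<forall>l\<in>T. i \<noteq> l \<longrightarrow> separated_mod m (st i) (a i) (st l) (a l))"
  unfolding cycle_placements_def by (auto simp: PiE_iff)

definition rotate_placement :: "int \<Rightarrow> int \<Rightarrow> 'i set \<Rightarrow> ('i \<Rightarrow> int) \<Rightarrow> 'i \<Rightarrow> int" where
  "rotate_placement m r T st = restrict (\<lambda>l. (st l + r) mod m) T"

lemma rotate_placement_apply: "i \<in> T \<Longrightarrow> rotate_placement m r T st i = (st i + r) mod m"
  unfolding rotate_placement_def by simp

lemma rotate_in_cycle_placements: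
  assumes "st \<in> cycle_placements a m T" "m > 0"
  shows "rotate_placement m r T st \<in> cycle_placements a m T"
  using assms unfolding cycle_placements_iff rotate_placement_def
  by (simp add: separated_mod_mod separated_mod_add)

lemma rotate_rotate:
  assumes "st \<in> cycle_placements a m T" "r + r' = 0"
  shows "rotate_placement m r' T (rotate_placement m r T st) = st"
proof (unfold rotate_placement_def[of m r' T], rule restrict_eq_PiE)
  show "st \<in> T \<rightarrow>\<^sub>E {0..<m}" using assms(1) unfolding cycle_placements_def by blast
  fix l assume "l \<in> T"
  then have "(restrict (\<lambda>l. (st l + r) mod m) T l + r') mod m = (st l + (r + r')) mod m"
    by (simp add: mod_add_left_eq add.assoc)
  also have "\<dots> = st l" using assms \<open>l \<in> T\<close> unfolding cycle_placements_iff by simp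
  finally show "(rotate_placement m r T st l + r') mod m = st l" unfolding rotate_placement_def .
qed

lemma cycle_placements_rotate_bij:
  assumes "m > 0" "i0 \<in> T" "r \<in> {0..<m}"
  shows "bij_betw (rotate_placement m (- r) T)
     {st \<in> cycle_placements a m T. st i0 = r} {st \<in> cycle_placements a m T. st i0 = 0}"
proof (rule bij_betw_byWitness[where f' = "rotate_placement m r T"])
  show "\<forall>st\<in>{st \<in> cycle_placements a m T. st i0 = r}.
        rotate_placement m r T (rotate_placement m (- r) T st) = st"
    "\<forall>st\<in>{st \<in> cycle_placements a m T. st i0 = 0}.
        rotate_placement m (- r) T (rotate_placement m r T st) = st"
    by (auto intro: rotate_rotate)
  show "rotate_placement m (- r) T ` {st \<in> cycle_placements a m T. st i0 = r}
        \<subseteq> {st \<in> cycle_placements a m T. st i0 = 0}"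
    "rotate_placement m r T ` {st \<in> cycle_placements a m T. st i0 = 0}
        \<subseteq> {st \<in> cycle_placements a m T. st i0 = r}"
    using assms
    by (auto simp: rotate_placement_apply intro: rotate_in_cycle_placements[OF _ assms(1)])
qed

lemma card_cycle_placements_eq:
  assumes fin: "finite T" and i0: "i0 \<in> T" and m: "m > 0"
  shows "card (cycle_placements a m T) = nat m * card {st \<in> cycle_placements a m T. st i0 = 0}"
proof -
  define B where "B r = {st \<in> cycle_placements a m T. st i0 = r}" for r
  have "st i0 \<in> {0..<m}" if "st \<in> cycle_placements a m T" for st
    using that i0 unfolding cycle_placements_iff by auto
  then have "cycle_placements a m T = (\<Union>r\<in>{0..<m}. B r)"
    unfolding B_def by blast
  moreover have "card (\<Union>r\<in>{0..<m}. B r) = (\<Sum>r\<in>{0..<m}. card (B r))"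
    using finite_cycle_placements[OF fin] unfolding B_def by (intro card_UN_disjoint) auto
  ultimately have "card (cycle_placements a m T) = (\<Sum>r\<in>{0..<m}. card (B r))"
    by simp
  also have "\<dots> = (\<Sum>r\<in>{0..<m}. card (B 0))"
    unfolding B_def
    by (intro sum.cong refl bij_betw_same_card[OF cycle_placements_rotate_bij[OF m i0]])
  finally show ?thesis unfolding B_def by simp
qed

lemma add_le_sum_pair:
  fixes a :: "'i \<Rightarrow> nat"
  assumes "finite T" "i \<in> T" "l \<in> T" "i \<noteq> l"
  shows "a i + a l \<le> sum a T"
proof -
  have "a i + a l = sum a {i, l}" using assms(4) by simp
  also have "\<dots> \<le> sum a T" using assms by (intro sum_mono2) auto
  finally show ?thesis .
qed

lemma cycle_placement_window:
  assumes st: "st \<in> cycle_placements a m T" and i0: "i0 \<in> T" and l: "l \<in> T" "l \<noteq> i0"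
    and st0: "st i0 = 0" and fin: "finite T" and pos: "\<forall>i\<in>T. 1 \<le> a i"
    and big: "int (sum a T) + 1 \<le> m"
  shows "int (a i0) + 1 \<le> st l \<and> st l + int (a l) \<le> m - 1"
proof -
  have "int (a i0) + int (a l) + 1 \<le> m"
    using add_le_sum_pair[OF fin i0 l(1) l(2)[symmetric], of a] big by linarith
  moreover have "separated_mod m 0 (a i0) (st l) (a l)" "0 \<le> st l" "st l < m"
    using st i0 l st0 unfolding cycle_placements_iff by force+
  ultimately show ?thesis using separated_mod_0_left pos i0 l by blast
qed

lemma cycle_placement_shift:
  assumes fin: "finite T" and i0: "i0 \<in> T" and pos: "\<forall>i\<in>T. 1 \<le> a i"
    and big: "int (sum a T) + 1 \<le> m" and st: "st \<in> cycle_placements a m T" "st i0 = 0"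
  defines "c \<equiv> int (a i0) + 1"
  shows "restrict (\<lambda>l. st l - c) (T - {i0}) \<in> line_placements a (m - c - 1) (T - {i0})"
proof -
  have W: "c \<le> st l \<and> st l + int (a l) \<le> m - 1" if "l \<in> T" "l \<noteq> i0" for l
    using cycle_placement_window[OF st(1) i0 that st(2) fin pos big] unfolding c_def .
  have "separated (st l) (a l) (st l') (a l')" if "l \<in> T - {i0}" "l' \<in> T - {i0}" "l \<noteq> l'" for l l'
  proof -
    have "separated_mod m (st l) (a l) (st l') (a l')"
      using st(1) that unfolding cycle_placements_iff by auto
    moreover have "0 \<le> c" unfolding c_def by simp
    then have "0 \<le> st l" "st l + int (a l) < m" "0 \<le> st l'" "st l' + int (a l') < m"
      using W[of l] W[of l'] that by auto
    ultimately show ?thesis by (simp add: separated_mod_iff_separated)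
  qed
  with W show ?thesis using pos unfolding line_placements_iff by (force simp: separated_diff)
qed

lemma line_placement_unshift:
  assumes fin: "finite T" and i0: "i0 \<in> T" and pos: "\<forall>i\<in>T. 1 \<le> a i"
    and big: "int (sum a T) + 1 \<le> m"
  defines "c \<equiv> int (a i0) + 1"
  assumes st: "st \<in> line_placements a (m - c - 1) (T - {i0})"
  shows "restrict (\<lambda>l. if l = i0 then 0 else st l + c) T \<in> cycle_placements a m T"
proof -
  define x where "x = restrict (\<lambda>l. if l = i0 then 0 else st l + c) T"
  have W: "c \<le> x l \<and> x l + int (a l) \<le> m - 1" if "l \<in> T" "l \<noteq> i0" for l
  proof -
    have "0 \<le> st l" "st l + int (a l) \<le> m - c - 1"
      using st that unfolding line_placements_iff by auto
    then show ?thesis using that unfolding x_def by simp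
  qed
  have R: "0 \<le> x l \<and> x l < m" if "l \<in> T" for l
  proof (cases "l = i0")
    case True
    have "0 \<le> int (sum a T)" by (rule of_nat_0_le_iff)
    then show ?thesis using True i0 big unfolding x_def by auto
  next
    case False then show ?thesis using W[OF that False] pos that unfolding c_def by force
  qed
  have Z: "separated_mod m (x i0) (a i0) (x l) (a l)" if "l \<in> T" "l \<noteq> i0" for l
  proof -
    have "int (a i0) + int (a l) + 1 \<le> m"
      using add_le_sum_pair[OF fin i0 that(1) that(2)[symmetric], of a] big by linarith
    then show ?thesis
      using separated_mod_0_left[of "x l" m "a i0" "a l"] W[OF that] R[OF that(1)] pos that i0
      unfolding c_def x_def by auto
  qed
  have "separated_mod m (x l) (a l) (x l') (a l')"
    if "l \<in> T" "l' \<in> T" "l \<noteq> i0" "l' \<noteq> i0" "l \<noteq> l'" for l l'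
  proof -
    have "separated (x l) (a l) (x l') (a l')"
      using st that separated_add[of _ c] unfolding x_def line_placements_iff by auto
    moreover have "0 \<le> c" unfolding c_def by simp
    then have "0 \<le> x l" "x l + int (a l) < m" "0 \<le> x l'" "x l' + int (a l') < m"
      using W[of l] W[of l'] that by auto
    ultimately show ?thesis by (simp add: separated_mod_iff_separated)
  qed
  with Z R show ?thesis
    using separated_mod_commute[of m] i0 big unfolding cycle_placements_iff x_def by auto
qed

lemma cycle_placements_at_0_bij:
  assumes fin: "finite T" and i0: "i0 \<in> T" and pos: "\<forall>i\<in>T. 1 \<le> a i"
    and big: "int (sum a T) + 1 \<le> m"
  defines "c \<equiv> int (a i0) + 1"
  shows "bij_betw (\<lambda>st. restrict (\<lambda>l. st l - c) (T - {i0}))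
     {st \<in> cycle_placements a m T. st i0 = 0} (line_placements a (m - c - 1) (T - {i0}))"
proof (rule bij_betw_byWitness[where f' = "\<lambda>st. restrict (\<lambda>l. if l = i0 then 0 else st l + c) T"])
  show "\<forall>st\<in>{st \<in> cycle_placements a m T. st i0 = 0}.
      restrict (\<lambda>l. if l = i0 then 0 else restrict (\<lambda>l. st l - c) (T - {i0}) l + c) T = st"
    unfolding cycle_placements_def by (auto intro!: restrict_eq_PiE)
  show "\<forall>st\<in>line_placements a (m - c - 1) (T - {i0}).
      restrict (\<lambda>l. restrict (\<lambda>l. if l = i0 then 0 else st l + c) T l - c) (T - {i0}) = st"
    unfolding line_placements_def by (auto intro!: restrict_eq_PiE)
  show "(\<lambda>st. restrict (\<lambda>l. st l - c) (T - {i0})) ` {st \<in> cycle_placements a m T. st i0 = 0}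
      \<subseteq> line_placements a (m - c - 1) (T - {i0})"
    using cycle_placement_shift[OF fin i0 pos big] unfolding c_def by blast
  show "(\<lambda>st. restrict (\<lambda>l. if l = i0 then 0 else st l + c) T)
        ` line_placements a (m - c - 1) (T - {i0})
      \<subseteq> {st \<in> cycle_placements a m T. st i0 = 0}"
    using line_placement_unshift[OF fin i0 pos big] i0 unfolding c_def by auto
qed

lemma card_cycle_placements:
  assumes fin: "finite T" and pos: "\<forall>i\<in>T. 1 \<le> a i" and big: "int (sum a T) + 1 \<le> m"
  shows "int (card (cycle_placements a m T)) = cycle_placement_number a T m"
proof (cases "T = {}")
  case True then show ?thesis by (simp add: cycle_placements_empty cycle_placement_number_def)
next
  case False
  then obtain i0 where i0: "i0 \<in> T" by blast
  define c where "c = int (a i0) + 1"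
  have ai0: "a i0 \<le> sum a T" using fin i0 by (intro member_le_sum) auto
  then have m0: "m > 0" using pos i0 big by linarith
  define n where "n = nat (m - c)"
  have "int n = m - c" using ai0 big unfolding n_def c_def by linarith
  moreover have "sum a (T - {i0}) = sum a T - a i0" using fin i0 by (simp add: sum_diff1_nat)
  ultimately have n: "int n - 1 = m - c - 1" "int n - int (sum a (T - {i0})) = m - int (sum a T) - 1"
    using ai0 unfolding c_def by linarith+
  have "card {st \<in> cycle_placements a m T. st i0 = 0} = card (line_placements a (int n - 1) (T - {i0}))"
    unfolding n(1) c_def using bij_betw_same_card[OF cycle_placements_at_0_bij[OF fin i0 pos big]]
    by simp
  then have "int (card (cycle_placements a m T))
      = m * trunc_ffact (m - int (sum a T) - 1) (card T - 1)"
    using card_cycle_placements_eq[OF fin i0 m0] card_line_placements[of "T - {i0}" a n] fin pos i0 m0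
    unfolding n(2) by simp
  then show ?thesis using False big unfolding cycle_placement_number_def trunc_ffact_def by simp
qed

text \<open>Placements of the segments \<open>T\<close> into a disjoint union of cycles, each cycle being
  represented by a list of its length; segment \<open>i\<close> is put on cycle \<open>fst (st i)\<close>, starting at
  position \<open>snd (st i)\<close>.\<close>
definition placements :: "('i \<Rightarrow> nat) \<Rightarrow> 'x list set \<Rightarrow> 'i set \<Rightarrow> ('i \<Rightarrow> 'x list \<times> int) set" where
  "placements a Cs T = {st \<in> T \<rightarrow>\<^sub>E (SIGMA c:Cs. {0..<int (length c)}).
     (\<forall>i\<in>T. \<forall>l\<in>T. i \<noteq> l \<longrightarrow> fst (st i) = fst (st l) \<longrightarrow>
        separated_mod (int (length (fst (st i)))) (snd (st i)) (a i) (snd (st l)) (a l))}"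

lemma placements_split:
  assumes st: "st \<in> placements a (insert c Cs) T" and S: "{i\<in>T. fst (st i) = c} = S"
  shows "restrict (\<lambda>i. snd (st i)) S \<in> cycle_placements a (int (length c)) S"
    and "restrict st (T - S) \<in> placements a Cs (T - S)"
proof -
  have P: "st \<in> T \<rightarrow>\<^sub>E (SIGMA c:insert c Cs. {0..<int (length c)})"
    and Sep: "\<And>i l. i \<in> T \<Longrightarrow> l \<in> T \<Longrightarrow> i \<noteq> l \<Longrightarrow> fst (st i) = fst (st l) \<Longrightarrow>
      separated_mod (int (length (fst (st i)))) (snd (st i)) (a i) (snd (st l)) (a l)"
    using st unfolding placements_def by auto
  have inS: "i \<in> T \<and> fst (st i) = c" if "i \<in> S" for i using S that by auto
  have notS: "fst (st i) \<in> Cs" if "i \<in> T - S" for i using S that P by (auto simp: PiE_iff)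
  have "snd (st i) \<in> {0..<int (length c)}" if "i \<in> S" for i
  proof -
    have "st i \<in> (SIGMA c:insert c Cs. {0..<int (length c)})" using P inS[OF that] by auto
    then show ?thesis using inS[OF that] by (cases "st i") auto
  qed
  then have "restrict (\<lambda>i. snd (st i)) S \<in> S \<rightarrow>\<^sub>E {0..<int (length c)}" by auto
  moreover have "separated_mod (int (length c)) (snd (st i)) (a i) (snd (st l)) (a l)"
    if "i \<in> S" "l \<in> S" "i \<noteq> l" for i l
    using Sep[of i l] inS[OF that(1)] inS[OF that(2)] that(3) by auto
  ultimately show "restrict (\<lambda>i. snd (st i)) S \<in> cycle_placements a (int (length c)) S"
    unfolding cycle_placements_def by auto
  have "restrict st (T - S) \<in> (T - S) \<rightarrow>\<^sub>E (SIGMA c:Cs. {0..<int (length c)})"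
    using P notS by (force simp: PiE_iff)
  then show "restrict st (T - S) \<in> placements a Cs (T - S)"
    unfolding placements_def using Sep by auto
qed

lemma placements_join:
  assumes p: "p \<in> cycle_placements a (int (length c)) S" and q: "q \<in> placements a Cs (T - S)"
    and c: "c \<notin> Cs" and S: "S \<subseteq> T"
  defines "x \<equiv> restrict (\<lambda>i. if i \<in> S then (c, p i) else q i) T"
  shows "x \<in> placements a (insert c Cs) T" and "{i\<in>T. fst (x i) = c} = S"
proof -
  have P: "p \<in> S \<rightarrow>\<^sub>E {0..<int (length c)}" "q \<in> (T - S) \<rightarrow>\<^sub>E (SIGMA c:Cs. {0..<int (length c)})"
    using p q unfolding cycle_placements_def placements_def by auto
  have qC: "fst (q i) \<in> Cs" if "i \<in> T - S" for i
  proof -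
    have "q i \<in> (SIGMA c:Cs. {0..<int (length c)})" using P(2) that by (auto simp: PiE_iff)
    then show ?thesis by (cases "q i") auto
  qed
  show xS: "{i\<in>T. fst (x i) = c} = S" using S qC c unfolding x_def by force
  have "separated_mod (int (length (fst (x i)))) (snd (x i)) (a i) (snd (x l)) (a l)"
    if "i \<in> T" "l \<in> T" "i \<noteq> l" "fst (x i) = fst (x l)" for i l
  proof (cases "i \<in> S")
    case True
    then have "l \<in> S" using that qC c unfolding x_def by (auto split: if_splits)
    then show ?thesis using p True that unfolding x_def cycle_placements_def by auto
  next
    case False
    then have "l \<notin> S" using that qC c unfolding x_def by (auto split: if_splits)
    then show ?thesis using q False that unfolding x_def placements_def by auto
  qed
  moreover have "x \<in> T \<rightarrow>\<^sub>E (SIGMA c:insert c Cs. {0..<int (length c)})"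
    using P unfolding x_def by (force simp: PiE_iff)
  ultimately show "x \<in> placements a (insert c Cs) T" unfolding placements_def by auto
qed

lemma placements_insert_bij:
  assumes c: "c \<notin> Cs" and S: "S \<subseteq> T"
  shows "bij_betw (\<lambda>st. (restrict (\<lambda>i. snd (st i)) S, restrict st (T - S)))
     {st \<in> placements a (insert c Cs) T. {i\<in>T. fst (st i) = c} = S}
     (cycle_placements a (int (length c)) S \<times> placements a Cs (T - S))"
proof (rule bij_betw_byWitness[where f' = "\<lambda>(p, q). restrict (\<lambda>i. if i \<in> S then (c, p i) else q i) T"])
  show "\<forall>st\<in>{st \<in> placements a (insert c Cs) T. {i\<in>T. fst (st i) = c} = S}.
      (\<lambda>(p, q). restrict (\<lambda>i. if i \<in> S then (c, p i) else q i) T)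
        (restrict (\<lambda>i. snd (st i)) S, restrict st (T - S)) = st"
    unfolding placements_def by (auto intro!: restrict_eq_PiE prod_eqI)
  show "\<forall>pq\<in>cycle_placements a (int (length c)) S \<times> placements a Cs (T - S).
      (\<lambda>st. (restrict (\<lambda>i. snd (st i)) S, restrict st (T - S)))
        ((\<lambda>(p, q). restrict (\<lambda>i. if i \<in> S then (c, p i) else q i) T) pq) = pq"
  proof
    fix pq assume "pq \<in> cycle_placements a (int (length c)) S \<times> placements a Cs (T - S)"
    moreover obtain p q where pq: "pq = (p, q)" by fastforce
    ultimately have P: "p \<in> S \<rightarrow>\<^sub>E {0..<int (length c)}"
                  "q \<in> (T - S) \<rightarrow>\<^sub>E (SIGMA c:Cs. {0..<int (length c)})"
      unfolding cycle_placements_def placements_def by auto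
    have "restrict (\<lambda>i. snd (restrict (\<lambda>i. if i \<in> S then (c, p i) else q i) T i)) S = p"
      using S by (intro restrict_eq_PiE[OF P(1)]) auto
    moreover have "restrict (restrict (\<lambda>i. if i \<in> S then (c, p i) else q i) T) (T - S) = q"
      by (intro restrict_eq_PiE[OF P(2)]) auto
    ultimately show "(\<lambda>st. (restrict (\<lambda>i. snd (st i)) S, restrict st (T - S)))
        ((\<lambda>(p, q). restrict (\<lambda>i. if i \<in> S then (c, p i) else q i) T) pq) = pq"
      unfolding pq by simp
  qed
  show "(\<lambda>st. (restrict (\<lambda>i. snd (st i)) S, restrict st (T - S))) `
      {st \<in> placements a (insert c Cs) T. {i\<in>T. fst (st i) = c} = S}
      \<subseteq> cycle_placements a (int (length c)) S \<times> placements a Cs (T - S)"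
  proof (rule image_subsetI)
    fix st assume "st \<in> {st \<in> placements a (insert c Cs) T. {i\<in>T. fst (st i) = c} = S}"
    then show "(restrict (\<lambda>i. snd (st i)) S, restrict st (T - S))
        \<in> cycle_placements a (int (length c)) S \<times> placements a Cs (T - S)"
      using placements_split[of st a c Cs T S] by simp
  qed
  show "(\<lambda>(p, q). restrict (\<lambda>i. if i \<in> S then (c, p i) else q i) T) `
      (cycle_placements a (int (length c)) S \<times> placements a Cs (T - S))
      \<subseteq> {st \<in> placements a (insert c Cs) T. {i\<in>T. fst (st i) = c} = S}"
  proof (rule image_subsetI)
    fix pq assume "pq \<in> cycle_placements a (int (length c)) S \<times> placements a Cs (T - S)"
    moreover obtain p q where pq: "pq = (p, q)" by fastforce
    ultimately show "(\<lambda>(p, q). restrict (\<lambda>i. if i \<in> S then (c, p i) else q i) T) pq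
        \<in> {st \<in> placements a (insert c Cs) T. {i\<in>T. fst (st i) = c} = S}"
      using placements_join[where a = a and p = p and q = q, OF _ _ c S] by auto
  qed
qed

text \<open>Classify placements by the set \<open>S\<close> of segments put on the new cycle \<open>c\<close>.\<close>
lemma card_placements_insert:
  assumes fin: "finite T" and c: "c \<notin> Cs" and finC: "finite Cs"
  shows "card (placements a (insert c Cs) T)
    = (\<Sum>S\<in>Pow T. card (cycle_placements a (int (length c)) S) * card (placements a Cs (T - S)))"
proof -
  define D where "D S = {st \<in> placements a (insert c Cs) T. {i\<in>T. fst (st i) = c} = S}" for S
  have "finite (SIGMA c:insert c Cs. {0..<int (length c)})" using finC by auto
  then have "finite (placements a (insert c Cs) T)"
    unfolding placements_def using fin by (intro finite_subset[OF _ finite_PiE]) auto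
  then have "finite (D S)" for S unfolding D_def by simp
  moreover have "D S \<inter> D S' = {}" if "S \<noteq> S'" for S S' using that unfolding D_def by auto
  ultimately have "card (\<Union>S\<in>Pow T. D S) = (\<Sum>S\<in>Pow T. card (D S))"
    using fin by (intro card_UN_disjoint) auto
  moreover have "placements a (insert c Cs) T = (\<Union>S\<in>Pow T. D S)"
  proof (intro equalityI subsetI)
    fix st assume "st \<in> placements a (insert c Cs) T"
    then show "st \<in> (\<Union>S\<in>Pow T. D S)" unfolding D_def
      by (intro UN_I[of "{i\<in>T. fst (st i) = c}"]) auto
  qed (auto simp: D_def)
  ultimately have "card (placements a (insert c Cs) T) = (\<Sum>S\<in>Pow T. card (D S))"
    by simp
  also have "\<dots> = (\<Sum>S\<in>Pow T. card (cycle_placements a (int (length c)) S)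
          * card (placements a Cs (T - S)))"
    unfolding D_def
    by (intro sum.cong refl)
        (simp add: bij_betw_same_card[OF placements_insert_bij[OF c]] card_cartesian_product)
  finally show ?thesis .
qed

lemma placements_empty: "placements a {} T = (if T = {} then {\<lambda>_. undefined} else {})"
  unfolding placements_def by (auto simp: PiE_eq_empty_iff)

lemma card_placements:
  assumes finC: "finite Cs" and fin: "finite T" and pos: "\<forall>i\<in>T. 1 \<le> a i"
    and big: "\<forall>c\<in>Cs. int (sum a T) + 1 \<le> int (length c)"
  shows "int (card (placements a Cs T)) = cycle_placement_number a T (\<Sum>c\<in>Cs. int (length c))"
  using finC fin pos big
proof (induction Cs arbitrary: T rule: finite_induct)
  case empty
  show ?case by (simp add: placements_empty cycle_placement_number_def)
next
  case (insert c Cs)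
  have le: "int (sum a S) \<le> int (sum a T)" if "S \<subseteq> T" for S
    using insert.prems(1) that by (simp add: sum_mono2)
  have "int (card (placements a (insert c Cs) T))
      = (\<Sum>S\<in>Pow T. int (card (cycle_placements a (int (length c)) S))
              * int (card (placements a Cs (T - S))))"
    using card_placements_insert[OF insert.prems(1) insert.hyps(2,1)] by simp
  also have "\<dots> = (\<Sum>S\<in>Pow T. cycle_placement_number a S (int (length c))
      * cycle_placement_number a (T - S) (\<Sum>c\<in>Cs. int (length c)))"
  proof (intro sum.cong refl arg_cong2[where f = "(*)"])
    fix S assume S: "S \<in> Pow T"
    show "int (card (cycle_placements a (int (length c)) S))
          = cycle_placement_number a S (int (length c))"
      using insert.prems S le[of S] finite_subset[OF _ insert.prems(1)]
      by (intro card_cycle_placements) auto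
    show "int (card (placements a Cs (T - S)))
          = cycle_placement_number a (T - S) (\<Sum>c\<in>Cs. int (length c))"
      using insert.prems le[of "T - S"] by (intro insert.IH) force+
  qed
  also have "\<dots> = cycle_placement_number a T (int (length c) + (\<Sum>c\<in>Cs. int (length c)))"
    by (rule cycle_placement_number_convolution[OF insert.prems(1)])
  finally show ?case using insert.hyps by simp
qed

section \<open>Embeddings of disjoint paths into disjoint cycles\<close>

definition induced_embeddings ::
    "'u set \<Rightarrow> ('u \<Rightarrow> 'u \<Rightarrow> bool) \<Rightarrow> 'v set \<Rightarrow> ('v \<Rightarrow> 'v \<Rightarrow> bool) \<Rightarrow> ('u \<Rightarrow> 'v) set" where
  "induced_embeddings VL adjL V adj = {f \<in> VL \<rightarrow>\<^sub>E V. inj_on f VL \<and>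
     (\<forall>u\<in>VL. \<forall>v\<in>VL. adjL u v \<longleftrightarrow> adj (f u) (f v))}"

lemma induced_embeddingsD:
  assumes "f \<in> induced_embeddings VL adjL V adj"
  shows "f \<in> VL \<rightarrow>\<^sub>E V" "inj_on f VL" "\<And>u v. u \<in> VL \<Longrightarrow> v \<in> VL \<Longrightarrow> adjL u v \<longleftrightarrow> adj (f u) (f v)"
  using assms unfolding induced_embeddings_def by auto

text \<open>Vertex \<open>(p, r)\<close> is the \<open>r\<close>-th vertex of the path \<open>p\<close>; vertex \<open>(c, x)\<close> is the \<open>x\<close>-th vertex
  of the cycle \<open>c\<close>.\<close>
definition path_vertices :: "'c list set \<Rightarrow> ('c list \<times> nat) set" where
  "path_vertices Ps = (SIGMA p:Ps. {..<length p})"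

definition path_adj :: "('c list \<times> nat) \<Rightarrow> ('c list \<times> nat) \<Rightarrow> bool" where
  "path_adj u v \<longleftrightarrow> fst u = fst v \<and> (snd v = Suc (snd u) \<or> snd u = Suc (snd v))"

definition cycle_vertices :: "'x list set \<Rightarrow> ('x list \<times> int) set" where
  "cycle_vertices Cs = (SIGMA c:Cs. {0..<int (length c)})"

definition cycle_adj :: "('x list \<times> int) \<Rightarrow> ('x list \<times> int) \<Rightarrow> bool" where
  "cycle_adj u v \<longleftrightarrow> fst u = fst v \<and>
     (snd v - snd u) mod int (length (fst u)) \<in> {1, int (length (fst u)) - 1}"

definition orient :: "('c list \<Rightarrow> bool) \<Rightarrow> 'c list \<Rightarrow> nat \<Rightarrow> int" where
  "orient e p r = (if e p then int r else int (length p) - 1 - int r)"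

text \<open>A path with a single vertex has only one orientation.\<close>
definition orientations :: "'c list set \<Rightarrow> ('c list \<Rightarrow> bool) set" where
  "orientations Ps = {e \<in> Ps \<rightarrow>\<^sub>E (UNIV :: bool set). \<forall>p\<in>Ps. length p = 1 \<longrightarrow> e p}"

definition emb_of_placement ::
    "'c list set \<Rightarrow> ('c list \<Rightarrow> 'x list \<times> int) \<Rightarrow> ('c list \<Rightarrow> bool) \<Rightarrow> 'c list \<times> nat \<Rightarrow> 'x list \<times> int" where
  "emb_of_placement Ps st e = restrict (\<lambda>(p, r).
     (fst (st p), (snd (st p) + orient e p r) mod int (length (fst (st p))))) (path_vertices Ps)"

lemma orient_range: "r < length p \<Longrightarrow> 0 \<le> orient e p r \<and> orient e p r < int (length p)"
  unfolding orient_def by auto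

lemma orient_inj: "r < length p \<Longrightarrow> r' < length p \<Longrightarrow> orient e p r = orient e p r' \<Longrightarrow> r = r'"
  unfolding orient_def by (auto split: if_splits)

lemma orient_diff: "\<bar>orient e p r' - orient e p r\<bar> = \<bar>int r' - int r\<bar>"
  unfolding orient_def by auto

lemma orient_surj: "0 \<le> t \<Longrightarrow> t < int (length p) \<Longrightarrow> \<exists>r<length p. orient e p r = t"
proof (cases "e p")
  case True
  then show "0 \<le> t \<Longrightarrow> t < int (length p) \<Longrightarrow> ?thesis"
    unfolding orient_def by (intro exI[of _ "nat t"]) auto
next
  case False
  then show "0 \<le> t \<Longrightarrow> t < int (length p) \<Longrightarrow> ?thesis"
    unfolding orient_def by (intro exI[of _ "nat (int (length p) - 1 - t)"]) auto
qed

lemma emb_of_placement_apply: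
  "(p, r) \<in> path_vertices Ps \<Longrightarrow>
     emb_of_placement Ps st e (p, r)
         = (fst (st p), (snd (st p) + orient e p r) mod int (length (fst (st p))))"
  unfolding emb_of_placement_def by simp

lemma mod_in_pm1_iff:
  fixes d m :: int
  assumes "\<bar>d\<bar> \<le> m - 2"
  shows "d mod m \<in> {1, m - 1} \<longleftrightarrow> \<bar>d\<bar> = 1"
proof -
  have "d mod m = 0 \<longleftrightarrow> d = 0"
  proof
    assume "d mod m = 0"
    then obtain k where d: "d = m * k" by (auto simp: dvd_eq_mod_eq_0[symmetric])
    have m: "m \<ge> 2" using assms by simp
    show "d = 0"
    proof (cases "k = 0")
      case False
      then have "m * 1 \<le> m * \<bar>k\<bar>" using m by (intro mult_left_mono) auto
      moreover have "\<bar>d\<bar> = m * \<bar>k\<bar>" using m unfolding d by (simp add: abs_mult)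
      ultimately show ?thesis using assms by linarith
    qed (simp add: d)
  qed simp
  moreover have "m - 1 \<noteq> 0" using assms by simp
  ultimately show ?thesis using mod_in_near_0_iff[OF assms] by auto
qed

lemma mod_eq_0_small:
  fixes d m :: int
  assumes "\<bar>d\<bar> \<le> m - 2" "d mod m = 0"
  shows "d = 0"
  using mod_in_near_0_iff[OF assms(1)] mod_in_pm1_iff[OF assms(1)] assms by auto

lemma mod_adjacent_cases:
  fixes x y m :: int
  assumes "0 \<le> y" "y < m" "(y - x) mod m \<in> {1, m - 1}"
  shows "y = (x + 1) mod m \<or> y = (x - 1) mod m"
proof -
  have "y = ((y - x) mod m + x) mod m" using assms by (simp add: mod_add_left_eq)
  moreover have "((m - 1) + x) mod m = (x - 1) mod m"
    using mod_mult_self1[of "x - 1" 1 m] by (simp add: algebra_simps)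
  ultimately show ?thesis using assms(3) by (auto simp: add.commute)
qed

lemma cycle_adj_mod_iff:
  assumes "3 \<le> length c"
  defines "m \<equiv> int (length c)"
  shows "cycle_adj (c, x mod m) (c, y mod m) \<longleftrightarrow> (x - y) mod m \<in> {1, m - 1}"
proof -
  have "m \<ge> 3" using assms(1) unfolding m_def by simp
  then have "m > 0" by simp
  moreover have "(y mod m - x mod m) mod m = (- (x - y)) mod m" by (simp add: mod_diff_eq)
  ultimately show ?thesis
    using mod_uminus_in_near_0_iff(2)[of m "x - y"] unfolding cycle_adj_def m_def by simp
qed

locale paths_in_cycles =
  fixes Ps :: "'c list set" and Cs :: "'x list set"
  assumes finite_Ps: "finite Ps" and finite_Cs: "finite Cs"
    and Ps_nonempty: "\<forall>p\<in>Ps. p \<noteq> []"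
    and Cs_length_ge_3: "\<forall>c\<in>Cs. 3 \<le> length c"
    and Cs_long: "\<forall>c\<in>Cs. sum length Ps < length c"
begin

abbreviation embeddings where
  "embeddings \<equiv> induced_embeddings (path_vertices Ps) path_adj (cycle_vertices Cs) cycle_adj"

lemma length_path_less_cycle: "p \<in> Ps \<Longrightarrow> c \<in> Cs \<Longrightarrow> int (length p) + 1 \<le> int (length c)"
  using member_le_sum[of p Ps length] finite_Ps Cs_long by fastforce

lemma emb_vertex_in:
  assumes f: "f \<in> embeddings" and "p \<in> Ps" "r < length p"
  shows "fst (f (p, r)) \<in> Cs" "0 \<le> snd (f (p, r))" "snd (f (p, r)) < int (length (fst (f (p, r))))"
proof -
  have "f (p, r) \<in> cycle_vertices Cs"
    using induced_embeddingsD(1)[OF f] assms unfolding path_vertices_def by (auto simp: PiE_iff)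
  then show "fst (f (p, r)) \<in> Cs" "0 \<le> snd (f (p, r))" "snd (f (p, r)) < int (length (fst (f (p, r))))"
    unfolding cycle_vertices_def by (cases "f (p, r)"; auto)+
qed

lemma emb_path_step:
  assumes f: "f \<in> embeddings" and p: "p \<in> Ps" and r: "Suc r < length p"
  defines "m \<equiv> int (length (fst (f (p, r))))"
  shows "fst (f (p, Suc r)) = fst (f (p, r)) \<and>
    (snd (f (p, Suc r)) = (snd (f (p, r)) + 1) mod m \<or> snd (f (p, Suc r)) = (snd (f (p, r)) - 1) mod m)"
proof -
  have "path_adj (p, r) (p, Suc r)" unfolding path_adj_def by simp
  then have A: "cycle_adj (f (p, r)) (f (p, Suc r))"
    using induced_embeddingsD(3)[OF f, of "(p, r)" "(p, Suc r)"] p r unfolding path_vertices_def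
    by auto
  then have fe: "fst (f (p, Suc r)) = fst (f (p, r))" unfolding cycle_adj_def by auto
  then show ?thesis
    using mod_adjacent_cases[of "snd (f (p, Suc r))" m "snd (f (p, r))"] A emb_vertex_in[OF f p r]
    unfolding cycle_adj_def m_def by auto
qed

definition emb_cycle :: "('c list \<times> nat \<Rightarrow> 'x list \<times> int) \<Rightarrow> 'c list \<Rightarrow> 'x list" where
  "emb_cycle f p = fst (f (p, 0))"

definition emb_start :: "('c list \<times> nat \<Rightarrow> 'x list \<times> int) \<Rightarrow> 'c list \<Rightarrow> int" where
  "emb_start f p = snd (f (p, 0))"

definition emb_forward :: "('c list \<times> nat \<Rightarrow> 'x list \<times> int) \<Rightarrow> 'c list \<Rightarrow> bool" where
  "emb_forward f p \<longleftrightarrow> length p = 1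
      \<or> snd (f (p, 1)) = (emb_start f p + 1) mod int (length (emb_cycle f p))"

text \<open>An embedding walks along each path in a fixed direction: it cannot turn back, by injectivity.\<close>
lemma emb_along_path:
  assumes f: "f \<in> embeddings" and p: "p \<in> Ps" and r: "r < length p"
  defines "d \<equiv> if emb_forward f p then 1 else -1"
  shows "f (p, r) = (emb_cycle f p, (emb_start f p + d * int r) mod int (length (emb_cycle f p)))"
  using r
proof (induction r rule: induct_nat_012)
  case 0
  then show ?case
    using emb_vertex_in[OF f p, of 0] unfolding emb_cycle_def emb_start_def
    by (cases "f (p, 0)") simp
next
  case 1
  then show ?case
    using emb_path_step[OF f p 1] unfolding d_def emb_forward_def emb_cycle_def emb_start_def
    by (cases "f (p, 1)") auto
next
  case (ge2 r)
  define c where "c = emb_cycle f p"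
  define m where "m = int (length c)"
  define y where "y = emb_start f p + d * int (Suc r)"
  have IH: "f (p, r) = (c, (y - d) mod m)" "f (p, Suc r) = (c, y mod m)"
    using ge2 unfolding c_def m_def y_def by (simp_all add: algebra_simps)
  have S: "fst (f (p, Suc (Suc r))) = c \<and>
      (snd (f (p, Suc (Suc r))) = (y + 1) mod m \<or> snd (f (p, Suc (Suc r))) = (y - 1) mod m)"
    using emb_path_step[OF f p ge2.prems] IH unfolding m_def by (simp add: mod_simps)
  have "f (p, Suc (Suc r)) \<noteq> f (p, r)"
    using p ge2.prems
    by (intro inj_on_contraD[OF induced_embeddingsD(2)[OF f]]) (auto simp: path_vertices_def)
  then have "snd (f (p, Suc (Suc r))) \<noteq> (y - d) mod m" using S IH
    by (cases "f (p, Suc (Suc r))") auto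
  then have "snd (f (p, Suc (Suc r))) = (y + d) mod m" using S unfolding d_def by auto
  then show ?case
    using S unfolding c_def m_def y_def by (cases "f (p, Suc (Suc r))") (simp add: algebra_simps)
qed

lemma placements_D:
  assumes "st \<in> placements length Cs Ps" "p \<in> Ps"
  shows "fst (st p) \<in> Cs" "0 \<le> snd (st p)" "snd (st p) < int (length (fst (st p)))"
proof -
  have "st p \<in> (SIGMA c:Cs. {0..<int (length c)})" using assms unfolding placements_def
    by (auto simp: PiE_iff)
  then show "fst (st p) \<in> Cs" "0 \<le> snd (st p)" "snd (st p) < int (length (fst (st p)))"
    by (cases "st p"; auto)+
qed

lemma placement_separated_at:
  assumes st: "st \<in> placements length Cs Ps" and pq: "p \<in> Ps" "q \<in> Ps" "p \<noteq> q" "fst (st p) = fst (st q)"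
    and r: "r < length p" "r' < length q"
  defines "m \<equiv> int (length (fst (st p)))"
  shows "(snd (st p) + orient e p r - (snd (st q) + orient e' q r')) mod m \<notin> {0, 1, m - 1}"
proof -
  have "separated_mod m (snd (st p)) (length p) (snd (st q)) (length q)"
    using st pq unfolding placements_def m_def by auto
  moreover have "nat (orient e p r) < length p" "nat (orient e' q r') < length q"
    "int (nat (orient e p r)) = orient e p r" "int (nat (orient e' q r')) = orient e' q r'"
    using orient_range[OF r(1), of e] orient_range[OF r(2), of e'] by auto
  ultimately show ?thesis unfolding separated_mod_def by metis
qed

context
  fixes st :: "'c list \<Rightarrow> 'x list \<times> int" and e :: "'c list \<Rightarrow> bool"
  assumes st: "st \<in> placements length Cs Ps"
begin

lemma emb_of_placement_in_vertices:
  "emb_of_placement Ps st e \<in> path_vertices Ps \<rightarrow>\<^sub>E cycle_vertices Cs"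
proof -
  have "emb_of_placement Ps st e (p, r) \<in> cycle_vertices Cs" if "(p, r) \<in> path_vertices Ps" for p r
  proof -
    have p: "p \<in> Ps" using that unfolding path_vertices_def by auto
    then have "int (length (fst (st p))) > 0" using Cs_length_ge_3 placements_D(1)[OF st p] by force
    then show ?thesis
      unfolding emb_of_placement_apply[OF that] cycle_vertices_def using placements_D(1)[OF st p]
      by simp
  qed
  then show ?thesis unfolding emb_of_placement_def by auto
qed

lemma emb_of_placement_inj: "inj_on (emb_of_placement Ps st e) (path_vertices Ps)"
proof (rule inj_onI, clarify)
  fix p r q r' assume u: "(p, r) \<in> path_vertices Ps" and v: "(q, r') \<in> path_vertices Ps"
    and eq: "emb_of_placement Ps st e (p, r) = emb_of_placement Ps st e (q, r')"
  have p: "p \<in> Ps" "r < length p" and q: "q \<in> Ps" "r' < length q"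
    using u v unfolding path_vertices_def by auto
  define m where "m = int (length (fst (st p)))"
  have fsteq: "fst (st p) = fst (st q)" using eq
    unfolding emb_of_placement_apply[OF u] emb_of_placement_apply[OF v] by simp
  then have "(snd (st p) + orient e p r) mod m = (snd (st q) + orient e q r') mod m"
    using eq unfolding emb_of_placement_apply[OF u] emb_of_placement_apply[OF v] m_def by simp
  then have z: "(snd (st p) + orient e p r - (snd (st q) + orient e q r')) mod m = 0"
    by (simp add: mod_eq_dvd_iff)
  show "p = q \<and> r = r'"
  proof (cases "p = q")
    case True
    have "\<bar>orient e p r - orient e p r'\<bar> \<le> m - 2"
      using orient_range[OF p(2), of e] orient_range[of r' p e] q True
        length_path_less_cycle[OF p(1) placements_D(1)[OF st p(1)]] unfolding m_def by auto
    moreover have "(orient e p r - orient e p r') mod m = 0" using z True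
      by (simp add: algebra_simps)
    ultimately have "orient e p r = orient e p r'" using mod_eq_0_small by force
    then show ?thesis using orient_inj[OF p(2)] q True by auto
  next
    case False
    then show ?thesis using placement_separated_at[OF st p(1) q(1) False fsteq p(2) q(2), of e e] z
      unfolding m_def by simp
  qed
qed

lemma emb_of_placement_adj_iff:
  assumes u: "(p, r) \<in> path_vertices Ps" and v: "(q, r') \<in> path_vertices Ps"
  shows "path_adj (p, r) (q, r') \<longleftrightarrow>
    cycle_adj (emb_of_placement Ps st e (p, r)) (emb_of_placement Ps st e (q, r'))"
proof -
  have p: "p \<in> Ps" "r < length p" and q: "q \<in> Ps" "r' < length q"
    using u v unfolding path_vertices_def by auto
  define m where "m = int (length (fst (st p)))"
  define A where "A = snd (st p) + orient e p r"
  define B where "B = snd (st q) + orient e q r'"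
  define D where "D = A - B"
  have adj: "cycle_adj (emb_of_placement Ps st e (p, r)) (emb_of_placement Ps st e (q, r'))
      \<longleftrightarrow> fst (st p) = fst (st q) \<and> D mod m \<in> {1, m - 1}"
  proof (cases "fst (st p) = fst (st q)")
    case True
    then show ?thesis
      using cycle_adj_mod_iff[of "fst (st p)" A B] Cs_length_ge_3 placements_D(1)[OF st p(1)]
      unfolding emb_of_placement_apply[OF u] emb_of_placement_apply[OF v] A_def B_def D_def m_def
      by simp
  qed (simp add: cycle_adj_def emb_of_placement_apply[OF u] emb_of_placement_apply[OF v])
  show ?thesis
  proof (cases "p = q")
    case True
    have "\<bar>orient e p r - orient e p r'\<bar> \<le> m - 2"
      using orient_range[OF p(2), of e] orient_range[of r' p e] q True
        length_path_less_cycle[OF p(1) placements_D(1)[OF st p(1)]] unfolding m_def by auto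
    moreover have "D = orient e p r - orient e p r'" unfolding D_def A_def B_def True by simp
    ultimately have "D mod m \<in> {1, m - 1} \<longleftrightarrow> \<bar>orient e p r - orient e p r'\<bar> = 1"
      using mod_in_pm1_iff by simp
    then show ?thesis using adj orient_diff[of e p r r'] True unfolding path_adj_def by auto
  next
    case False
    then show ?thesis using adj placement_separated_at[OF st p(1) q(1) False _ p(2) q(2), of e e]
      unfolding path_adj_def D_def A_def B_def m_def by auto
  qed
qed

lemma emb_of_placement_in: "emb_of_placement Ps st e \<in> embeddings"
  unfolding induced_embeddings_def
  using emb_of_placement_in_vertices emb_of_placement_inj emb_of_placement_adj_iff by auto

end

text \<open>The inverse construction records the cycle of each path, the first position of its image in
  the cyclic order of that cycle, and the direction in which it is traversed.\<close>
definition emb_placement :: "('c list \<times> nat \<Rightarrow> 'x list \<times> int) \<Rightarrow> 'c list \<Rightarrow> 'x list \<times> int" where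
  "emb_placement f = restrict (\<lambda>p. (emb_cycle f p,
     (emb_start f p - (if emb_forward f p then 0 else int (length p) - 1))
         mod int (length (emb_cycle f p)))) Ps"

definition emb_orientation :: "('c list \<times> nat \<Rightarrow> 'x list \<times> int) \<Rightarrow> 'c list \<Rightarrow> bool" where
  "emb_orientation f = restrict (emb_forward f) Ps"

context
  fixes f assumes f: "f \<in> embeddings"
begin

lemma emb_of_placement_emb_placement: "emb_of_placement Ps (emb_placement f) (emb_orientation f) = f"
  unfolding emb_of_placement_def
proof (rule restrict_eq_PiE[OF induced_embeddingsD(1)[OF f]], clarify)
  fix p r assume "(p, r) \<in> path_vertices Ps"
  then have p: "p \<in> Ps" "r < length p" unfolding path_vertices_def by auto
  define m where "m = int (length (emb_cycle f p))"
  have "((emb_start f p - (if emb_forward f p then 0 else int (length p) - 1)) mod m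
      + orient (emb_forward f) p r) mod m
      = (emb_start f p + (if emb_forward f p then 1 else -1) * int r) mod m"
    unfolding orient_def by (simp add: mod_add_left_eq)
  moreover have "orient (emb_orientation f) p r = orient (emb_forward f) p r"
    using p unfolding emb_orientation_def orient_def by simp
  ultimately show "(fst (emb_placement f p), (snd (emb_placement f p) + orient (emb_orientation f) p r)
      mod int (length (fst (emb_placement f p)))) = f (p, r)"
    using emb_along_path[OF f p] p unfolding emb_placement_def m_def by simp
qed

lemma emb_placement_D:
  assumes p: "p \<in> Ps"
  shows "fst (emb_placement f p) \<in> Cs" "0 \<le> snd (emb_placement f p)"
    "snd (emb_placement f p) < int (length (fst (emb_placement f p)))"
proof -
  have c: "emb_cycle f p \<in> Cs" using emb_vertex_in[OF f p, of 0] Ps_nonempty p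
    unfolding emb_cycle_def by auto
  then have "int (length (emb_cycle f p)) > 0" using Cs_length_ge_3 by force
  then show "fst (emb_placement f p) \<in> Cs" "0 \<le> snd (emb_placement f p)"
    "snd (emb_placement f p) < int (length (fst (emb_placement f p)))"
    using c p unfolding emb_placement_def by auto
qed

lemma emb_placement_separated:
  assumes pq: "p \<in> Ps" "q \<in> Ps" "p \<noteq> q" "fst (emb_placement f p) = fst (emb_placement f q)"
  defines "m \<equiv> int (length (fst (emb_placement f p)))"
  shows "separated_mod m (snd (emb_placement f p)) (length p) (snd (emb_placement f q)) (length q)"
  unfolding separated_mod_def
proof (intro allI impI)
  fix t t' assume tt: "t < length p" "t' < length q"
  define st where "st = emb_placement f"
  define e where "e = emb_orientation f"
  obtain r where r: "r < length p" "orient e p r = int t" using orient_surj[of "int t" p e] tt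
    by auto
  obtain r' where r': "r' < length q" "orient e q r' = int t'" using orient_surj[of "int t'" q e] tt
    by auto
  have u: "(p, r) \<in> path_vertices Ps" and v: "(q, r') \<in> path_vertices Ps"
    using r r' pq unfolding path_vertices_def by auto
  have fu: "f (p, r) = (fst (st p), (snd (st p) + int t) mod m)"
    using emb_of_placement_apply[OF u, of st e] emb_of_placement_emb_placement r
    unfolding st_def e_def m_def by simp
  have fv: "f (q, r') = (fst (st p), (snd (st q) + int t') mod m)"
    using emb_of_placement_apply[OF v, of st e] emb_of_placement_emb_placement r' pq(4)
    unfolding st_def e_def m_def by simp
  have "f (p, r) \<noteq> f (q, r')" using inj_on_contraD[OF induced_embeddingsD(2)[OF f] _ u v] pq(3)
    by auto
  then have "(snd (st p) + int t - (snd (st q) + int t')) mod m \<noteq> 0"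
    using fu fv by (auto simp: mod_eq_dvd_iff dvd_eq_mod_eq_0)
  moreover have "\<not> cycle_adj (f (p, r)) (f (q, r'))"
    using induced_embeddingsD(3)[OF f u v] pq(3) unfolding path_adj_def by simp
  then have "(snd (st p) + int t - (snd (st q) + int t')) mod m \<notin> {1, m - 1}"
    using cycle_adj_mod_iff[of "fst (st p)"] Cs_length_ge_3 emb_placement_D(1)[OF pq(1)] fu fv
    unfolding st_def m_def by simp
  ultimately show "(snd (st p) + int t - (snd (st q) + int t')) mod m \<notin> {0, 1, m - 1}"
    unfolding st_def by simp
qed

lemma emb_placement_in: "emb_placement f \<in> placements length Cs Ps"
  unfolding placements_def
  using emb_placement_D emb_placement_separated by (auto simp: emb_placement_def)

lemma emb_orientation_in: "emb_orientation f \<in> orientations Ps"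
  unfolding orientations_def emb_orientation_def emb_forward_def by auto

end

context
  fixes st :: "'c list \<Rightarrow> 'x list \<times> int" and e :: "'c list \<Rightarrow> bool"
  assumes st: "st \<in> placements length Cs Ps" and e: "e \<in> orientations Ps"
begin

lemma emb_cycle_start_emb_of_placement:
  assumes p: "p \<in> Ps"
  shows "emb_cycle (emb_of_placement Ps st e) p = fst (st p)"
    "emb_start (emb_of_placement Ps st e) p = (snd (st p) + orient e p 0) mod int (length (fst (st p)))"
proof -
  have "(p, 0) \<in> path_vertices Ps" using p Ps_nonempty unfolding path_vertices_def by auto
  then show "emb_cycle (emb_of_placement Ps st e) p = fst (st p)"
    "emb_start (emb_of_placement Ps st e) p = (snd (st p) + orient e p 0) mod int (length (fst (st p)))"
    unfolding emb_cycle_def emb_start_def by (simp_all add: emb_of_placement_apply)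
qed

lemma emb_forward_emb_of_placement:
  assumes p: "p \<in> Ps"
  shows "emb_forward (emb_of_placement Ps st e) p = e p"
proof (cases "length p = 1")
  case True then show ?thesis using e p unfolding emb_forward_def orientations_def by simp
next
  case False
  define m where "m = int (length (fst (st p)))"
  define L where "L = int (length p)"
  have m3: "m \<ge> 3" using Cs_length_ge_3 placements_D(1)[OF st p] unfolding m_def by auto
  have "1 < length p" using False Ps_nonempty p by (cases p) auto
  then have "(p, 1) \<in> path_vertices Ps" using p unfolding path_vertices_def by auto
  then have f1: "snd (emb_of_placement Ps st e (p, 1)) = (snd (st p) + orient e p 1) mod m"
    unfolding m_def by (simp only: emb_of_placement_apply snd_conv)
  show ?thesis
  proof (cases "e p")
    case True
    then show ?thesis using f1 emb_cycle_start_emb_of_placement[OF p] False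
      unfolding emb_forward_def orient_def m_def by (simp add: mod_simps)
  next
    case eF: False
    have "(snd (st p) + L - 2) mod m \<noteq> (snd (st p) + L) mod m"
    proof
      assume "(snd (st p) + L - 2) mod m = (snd (st p) + L) mod m"
      then have "(- 2) mod m = 0" by (simp add: mod_eq_dvd_iff)
      moreover have "(- 2) mod m = m - 2" using m3 by (simp add: zmod_zminus1_eq_if)
      ultimately show False using m3 by simp
    qed
    then show ?thesis using f1 emb_cycle_start_emb_of_placement[OF p] False eF
      unfolding emb_forward_def orient_def m_def L_def by (simp add: mod_simps algebra_simps)
  qed
qed

lemma emb_placement_emb_of_placement: "emb_placement (emb_of_placement Ps st e) = st"
  unfolding emb_placement_def
proof (rule restrict_eq_PiE)
  show "st \<in> Ps \<rightarrow>\<^sub>E (SIGMA c:Cs. {0..<int (length c)})" using st unfolding placements_def by blast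
  fix p assume p: "p \<in> Ps"
  define m where "m = int (length (fst (st p)))"
  have "((snd (st p) + orient e p 0) mod m - (if e p then 0 else int (length p) - 1)) mod m = snd (st p)"
    using placements_D[OF st p] unfolding orient_def m_def by (simp add: mod_diff_left_eq)
  then show "(emb_cycle (emb_of_placement Ps st e) p,
      (emb_start (emb_of_placement Ps st e) p - (if emb_forward (emb_of_placement Ps st e) p then 0
        else int (length p) - 1)) mod int (length (emb_cycle (emb_of_placement Ps st e) p))) = st p"
    using emb_cycle_start_emb_of_placement[OF p] emb_forward_emb_of_placement[OF p] unfolding m_def
    by simp
qed

lemma emb_orientation_emb_of_placement: "emb_orientation (emb_of_placement Ps st e) = e"
  using e emb_forward_emb_of_placement unfolding emb_orientation_def orientations_def
  by (auto intro!: restrict_eq_PiE)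

end

theorem card_embeddings: "card embeddings = card (placements length Cs Ps) * card (orientations Ps)"
proof -
  have "bij_betw (\<lambda>(st, e). emb_of_placement Ps st e)
        (placements length Cs Ps \<times> orientations Ps) embeddings"
  proof (rule bij_betw_byWitness[where f' = "\<lambda>f. (emb_placement f, emb_orientation f)"])
  qed (auto simp: emb_placement_emb_of_placement emb_orientation_emb_of_placement
      emb_of_placement_emb_placement emb_of_placement_in emb_placement_in emb_orientation_in)
  then show ?thesis by (metis bij_betw_same_card card_cartesian_product)
qed

end

section \<open>Induced copies and induced embeddings\<close>

lemma induced_embeddings_compose:
  assumes f: "f \<in> induced_embeddings VL adjL V adj"
    and \<alpha>: "bij_betw \<alpha> VL2 VL" "\<forall>u\<in>VL2. \<forall>v\<in>VL2. adjL2 u v \<longleftrightarrow> adjL (\<alpha> u) (\<alpha> v)"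
    and \<beta>: "inj_on \<beta> V" "\<beta> ` V \<subseteq> V2" "\<forall>x\<in>V. \<forall>y\<in>V. adj x y \<longleftrightarrow> adj2 (\<beta> x) (\<beta> y)"
  shows "restrict (\<lambda>u. \<beta> (f (\<alpha> u))) VL2 \<in> induced_embeddings VL2 adjL2 V2 adj2"
proof -
  have fV: "f u \<in> V" if "u \<in> VL" for u using induced_embeddingsD(1)[OF f] that by auto
  have \<alpha>VL: "\<alpha> u \<in> VL" if "u \<in> VL2" for u using \<alpha>(1) that by (auto simp: bij_betw_def)
  have "inj_on (\<lambda>u. \<beta> (f (\<alpha> u))) VL2"
    using \<alpha>(1) \<beta>(1) induced_embeddingsD(2)[OF f] fV \<alpha>VL
    by (auto simp: bij_betw_def inj_on_def)
  moreover have "adjL2 u v \<longleftrightarrow> adj2 (\<beta> (f (\<alpha> u))) (\<beta> (f (\<alpha> v)))" if "u \<in> VL2" "v \<in> VL2" for u v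
    using \<alpha>(2) \<beta>(3) induced_embeddingsD(3)[OF f] fV \<alpha>VL that by simp
  ultimately show ?thesis using fV \<alpha>VL \<beta>(2) unfolding induced_embeddings_def inj_on_def by auto
qed

lemma inv_into_adj_iff:
  assumes "bij_betw \<alpha> A B" "\<forall>u\<in>A. \<forall>v\<in>A. R u v \<longleftrightarrow> S (\<alpha> u) (\<alpha> v)"
  shows "\<forall>u\<in>B. \<forall>v\<in>B. S u v \<longleftrightarrow> R (inv_into A \<alpha> u) (inv_into A \<alpha> v)"
proof (intro ballI)
  fix u v assume "u \<in> B" "v \<in> B"
  moreover from this have "inv_into A \<alpha> u \<in> A" "inv_into A \<alpha> v \<in> A"
    using bij_betw_inv_into[OF assms(1)] by (auto dest: bij_betwE)
  ultimately show "S u v \<longleftrightarrow> R (inv_into A \<alpha> u) (inv_into A \<alpha> v)"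
    using assms by (simp add: bij_betw_inv_into_right)
qed

lemma restrict_compose_cancel:
  assumes f: "f \<in> A \<rightarrow>\<^sub>E B" and \<alpha>: "\<And>u. u \<in> A \<Longrightarrow> \<alpha>' u \<in> A' \<and> \<alpha> (\<alpha>' u) = u"
    and \<beta>: "\<And>y. y \<in> B \<Longrightarrow> \<beta> (\<beta>' y) = y"
  shows "restrict (\<lambda>u. \<beta> (restrict (\<lambda>u. \<beta>' (f (\<alpha> u))) A' (\<alpha>' u))) A = f"
proof (rule restrict_eq_PiE[OF f])
  fix u assume "u \<in> A"
  moreover from this have "f u \<in> B" using f by auto
  ultimately show "\<beta> (restrict (\<lambda>u. \<beta>' (f (\<alpha> u))) A' (\<alpha>' u)) = f u" using \<alpha> \<beta> by simp
qed

lemma card_induced_embeddings_transfer: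
  assumes \<alpha>: "bij_betw \<alpha> VL2 VL" "\<forall>u\<in>VL2. \<forall>v\<in>VL2. adjL2 u v \<longleftrightarrow> adjL (\<alpha> u) (\<alpha> v)"
    and \<beta>: "bij_betw \<beta> V2 V" "\<forall>x\<in>V2. \<forall>y\<in>V2. adj2 x y \<longleftrightarrow> adj (\<beta> x) (\<beta> y)"
  shows "card (induced_embeddings VL adjL V adj) = card (induced_embeddings VL2 adjL2 V2 adj2)"
proof -
  define \<alpha>' where "\<alpha>' = inv_into VL2 \<alpha>"
  define \<beta>' where "\<beta>' = inv_into V2 \<beta>"
  have \<alpha>': "bij_betw \<alpha>' VL VL2" unfolding \<alpha>'_def by (rule bij_betw_inv_into[OF \<alpha>(1)])
  have \<beta>': "bij_betw \<beta>' V V2" unfolding \<beta>'_def by (rule bij_betw_inv_into[OF \<beta>(1)])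
  have \<alpha>\<alpha>': "\<alpha>' u \<in> VL2 \<and> \<alpha> (\<alpha>' u) = u" if "u \<in> VL" for u
    using \<alpha>(1) \<alpha>' that unfolding \<alpha>'_def by (auto simp: bij_betw_inv_into_right dest: bij_betwE)
  have \<alpha>'\<alpha>: "\<alpha> u \<in> VL \<and> \<alpha>' (\<alpha> u) = u" if "u \<in> VL2" for u
    using \<alpha>(1) that unfolding \<alpha>'_def by (auto simp: bij_betw_inv_into_left dest: bij_betwE)
  have "bij_betw (\<lambda>f. restrict (\<lambda>u. \<beta>' (f (\<alpha> u))) VL2)
      (induced_embeddings VL adjL V adj) (induced_embeddings VL2 adjL2 V2 adj2)"
  proof (rule bij_betw_byWitness[where f' = "\<lambda>g. restrict (\<lambda>u. \<beta> (g (\<alpha>' u))) VL"])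
    show "\<forall>f\<in>induced_embeddings VL adjL V adj.
        restrict (\<lambda>u. \<beta> (restrict (\<lambda>u. \<beta>' (f (\<alpha> u))) VL2 (\<alpha>' u))) VL = f"
      using restrict_compose_cancel[where \<alpha> = \<alpha> and \<alpha>' = \<alpha>' and \<beta> = \<beta> and \<beta>' = \<beta>',
          OF induced_embeddingsD(1) \<alpha>\<alpha>'] \<beta>(1)
      unfolding \<beta>'_def by (simp add: bij_betw_inv_into_right)
    show "\<forall>g\<in>induced_embeddings VL2 adjL2 V2 adj2.
        restrict (\<lambda>u. \<beta>' (restrict (\<lambda>u. \<beta> (g (\<alpha>' u))) VL (\<alpha> u))) VL2 = g"
      using restrict_compose_cancel[where \<alpha> = \<alpha>' and \<alpha>' = \<alpha> and \<beta> = \<beta>' and \<beta>' = \<beta>,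
          OF induced_embeddingsD(1) \<alpha>'\<alpha>] \<beta>(1)
      unfolding \<beta>'_def by (simp add: bij_betw_inv_into_left)
    show "(\<lambda>f. restrict (\<lambda>u. \<beta>' (f (\<alpha> u))) VL2) ` induced_embeddings VL adjL V adj
        \<subseteq> induced_embeddings VL2 adjL2 V2 adj2"
      using induced_embeddings_compose[where \<alpha> = \<alpha> and \<beta> = \<beta>', OF _ \<alpha>]
        \<beta>' inv_into_adj_iff[OF \<beta>] unfolding \<beta>'_def by (auto simp: bij_betw_def)
    show "(\<lambda>g. restrict (\<lambda>u. \<beta> (g (\<alpha>' u))) VL) ` induced_embeddings VL2 adjL2 V2 adj2
        \<subseteq> induced_embeddings VL adjL V adj"
      using induced_embeddings_compose[where \<alpha> = \<alpha>' and \<beta> = \<beta>, OF _ \<alpha>']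
        inv_into_adj_iff[OF \<alpha>] \<beta> unfolding \<alpha>'_def by (auto simp: bij_betw_def)
  qed
  then show ?thesis by (rule bij_betw_same_card)
qed

abbreviation edge_adj :: "'a set set \<Rightarrow> 'a \<Rightarrow> 'a \<Rightarrow> bool" where
  "edge_adj E \<equiv> \<lambda>u v. {u, v} \<in> E"

lemma induced_edges_iff: "x \<in> X \<Longrightarrow> y \<in> X \<Longrightarrow> {x, y} \<in> induced_edges E X \<longleftrightarrow> {x, y} \<in> E"
  unfolding induced_edges_def by auto

lemma induced_embeddings_codomain:
  "f \<in> induced_embeddings VL adjL V adj \<Longrightarrow> f ` VL \<subseteq> X \<Longrightarrow> X \<subseteq> V \<Longrightarrow>
     f \<in> induced_embeddings VL adjL X adj"
  unfolding induced_embeddings_def by (auto simp: PiE_iff)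

lemma graph_iso_image:
  assumes f: "f \<in> induced_embeddings VL (edge_adj EL) V (edge_adj E)"
  shows "graph_iso (f ` VL) (induced_edges E (f ` VL)) VL EL"
  unfolding graph_iso_def
proof (intro exI conjI ballI)
  have inj: "inj_on f VL" by (rule induced_embeddingsD(2)[OF f])
  show "bij_betw (inv_into VL f) (f ` VL) VL" using inj
    by (simp add: bij_betw_inv_into bij_betw_imageI)
  fix x y assume "x \<in> f ` VL" "y \<in> f ` VL"
  moreover obtain u v where uv: "u \<in> VL" "v \<in> VL" "x = f u" "y = f v"
    using \<open>x \<in> f ` VL\<close> \<open>y \<in> f ` VL\<close> by blast
  moreover have "inv_into VL f x = u" "inv_into VL f y = v" using inj uv by auto
  ultimately show "{x, y} \<in> induced_edges E (f ` VL) \<longleftrightarrow> {inv_into VL f x, inv_into VL f y} \<in> EL"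
    using induced_edges_iff[of x "f ` VL" y E] induced_embeddingsD(3)[OF f uv(1,2)] by (simp only:)
qed

lemma induced_embedding_onto_of_automorphism:
  assumes finL: "finite VL" and h: "h \<in> induced_embeddings VL adjL VL adjL"
    and \<psi>: "bij_betw \<psi> VL X" "\<forall>u\<in>VL. \<forall>v\<in>VL. adjL u v \<longleftrightarrow> adj (\<psi> u) (\<psi> v)" and X: "X \<subseteq> V"
  shows "restrict (\<lambda>u. \<psi> (h u)) VL \<in> induced_embeddings VL adjL V adj"
    and "restrict (\<lambda>u. \<psi> (h u)) VL ` VL = X"
proof -
  have id: "bij_betw (\<lambda>u. u) VL VL" "\<forall>u\<in>VL. \<forall>v\<in>VL. adjL u v \<longleftrightarrow> adjL u v"
    by (simp_all add: bij_betw_def)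
  show "restrict (\<lambda>u. \<psi> (h u)) VL \<in> induced_embeddings VL adjL V adj"
    using induced_embeddings_compose[where \<alpha> = "\<lambda>u. u" and \<beta> = \<psi>, OF h id] \<psi> X
    by (auto simp: bij_betw_def)
  have "h ` VL = VL" using induced_embeddingsD(1,2)[OF h] finL by (intro endo_inj_surj) auto
  moreover have "restrict (\<lambda>u. \<psi> (h u)) VL ` VL = \<psi> ` (h ` VL)" by (auto simp: image_image)
  ultimately show "restrict (\<lambda>u. \<psi> (h u)) VL ` VL = X" using \<psi> by (simp add: bij_betw_def)
qed

lemma card_induced_embeddings_onto:
  assumes finL: "finite VL" and X: "graph_iso X (induced_edges E X) VL EL" "X \<subseteq> V"
  shows "card {f \<in> induced_embeddings VL (edge_adj EL) V (edge_adj E). f ` VL = X}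
    = card (induced_embeddings VL (edge_adj EL) VL (edge_adj EL))"
proof -
  from X obtain \<phi> where \<phi>: "bij_betw \<phi> X VL"
    and "\<forall>x\<in>X. \<forall>y\<in>X. {x, y} \<in> induced_edges E X \<longleftrightarrow> {\<phi> x, \<phi> y} \<in> EL"
    unfolding graph_iso_def by blast
  then have \<phi>_adj: "\<forall>x\<in>X. \<forall>y\<in>X. edge_adj E x y \<longleftrightarrow> edge_adj EL (\<phi> x) (\<phi> y)"
    by (simp add: induced_edges_iff)
  define \<psi> where "\<psi> = inv_into X \<phi>"
  have \<psi>: "bij_betw \<psi> VL X" unfolding \<psi>_def by (rule bij_betw_inv_into[OF \<phi>])
  have \<psi>_adj: "\<forall>u\<in>VL. \<forall>v\<in>VL. edge_adj EL u v \<longleftrightarrow> edge_adj E (\<psi> u) (\<psi> v)"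
    unfolding \<psi>_def by (rule inv_into_adj_iff[OF \<phi> \<phi>_adj])
  have id: "bij_betw (\<lambda>u. u) VL VL" "\<forall>u\<in>VL. \<forall>v\<in>VL. edge_adj EL u v \<longleftrightarrow> edge_adj EL u v"
    by (simp_all add: bij_betw_def)
  have "bij_betw (\<lambda>h. restrict (\<lambda>u. \<psi> (h u)) VL) (induced_embeddings VL (edge_adj EL) VL (edge_adj EL))
      {f \<in> induced_embeddings VL (edge_adj EL) V (edge_adj E). f ` VL = X}"
  proof (rule bij_betw_byWitness[where f' = "\<lambda>f. restrict (\<lambda>u. \<phi> (f u)) VL"])
    show "\<forall>h\<in>induced_embeddings VL (edge_adj EL) VL (edge_adj EL).
        restrict (\<lambda>u. \<phi> (restrict (\<lambda>u. \<psi> (h u)) VL u)) VL = h"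
      using \<phi> unfolding \<psi>_def
      by (auto intro!: restrict_eq_PiE dest!: induced_embeddingsD(1) simp: PiE_iff bij_betw_inv_into_right)
    show "\<forall>f\<in>{f \<in> induced_embeddings VL (edge_adj EL) V (edge_adj E). f ` VL = X}.
        restrict (\<lambda>u. \<psi> (restrict (\<lambda>u. \<phi> (f u)) VL u)) VL = f"
      using \<phi> unfolding \<psi>_def
      by (auto intro!: restrict_eq_PiE dest!: induced_embeddingsD(1) simp: PiE_iff bij_betw_inv_into_left)
    show "(\<lambda>h. restrict (\<lambda>u. \<psi> (h u)) VL) ` induced_embeddings VL (edge_adj EL) VL (edge_adj EL)
        \<subseteq> {f \<in> induced_embeddings VL (edge_adj EL) V (edge_adj E). f ` VL = X}"
      using induced_embedding_onto_of_automorphism[OF finL _ \<psi> \<psi>_adj X(2)] by blast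
    show "(\<lambda>f. restrict (\<lambda>u. \<phi> (f u)) VL)
          ` {f \<in> induced_embeddings VL (edge_adj EL) V (edge_adj E). f ` VL = X}
        \<subseteq> induced_embeddings VL (edge_adj EL) VL (edge_adj EL)"
    proof (rule image_subsetI)
      fix f assume "f \<in> {f \<in> induced_embeddings VL (edge_adj EL) V (edge_adj E). f ` VL = X}"
      then have "f \<in> induced_embeddings VL (edge_adj EL) X (edge_adj E)"
        using induced_embeddings_codomain[of f VL "edge_adj EL" V "edge_adj E" X] X(2) by simp
      then show "restrict (\<lambda>u. \<phi> (f u)) VL \<in> induced_embeddings VL (edge_adj EL) VL (edge_adj EL)"
        using induced_embeddings_compose[where f = f and \<alpha> = "\<lambda>u. u" and \<beta> = \<phi>, OF _ id] \<phi> \<phi>_adj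
        by (auto simp: bij_betw_def)
    qed
  qed
  then show ?thesis by (simp add: bij_betw_same_card)
qed

lemma induced_count_mult_automorphisms:
  assumes finV: "finite V" and finL: "finite VL"
  shows "induced_count V E VL EL * card (induced_embeddings VL (edge_adj EL) VL (edge_adj EL))
       = card (induced_embeddings VL (edge_adj EL) V (edge_adj E))"
proof -
  define Em where "Em = induced_embeddings VL (edge_adj EL) V (edge_adj E)"
  define Good where "Good = {X. X \<subseteq> V \<and> graph_iso X (induced_edges E X) VL EL}"
  define Onto where "Onto X = {f \<in> Em. f ` VL = X}" for X
  have "finite Em" unfolding Em_def induced_embeddings_def
    using finV finL by (intro finite_subset[OF _ finite_PiE[OF finL, of "\<lambda>_. V"]]) auto
  have "f ` VL \<in> Good" if "f \<in> Em" for f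
    using graph_iso_image[of f] induced_embeddingsD(1)[of f] that unfolding Em_def Good_def
    by (auto simp: PiE_iff)
  then have "Em = (\<Union>X\<in>Good. Onto X)" unfolding Onto_def by auto
  moreover have "finite Good" unfolding Good_def using finV
    by (simp add: finite_subset[of _ "Pow V"])
  moreover have "card (\<Union>X\<in>Good. Onto X) = (\<Sum>X\<in>Good. card (Onto X))"
    using \<open>finite Em\<close> \<open>finite Good\<close> unfolding Onto_def by (intro card_UN_disjoint) auto
  ultimately have "card Em = (\<Sum>X\<in>Good. card (Onto X))" by simp
  also have "\<dots> = (\<Sum>X\<in>Good. card (induced_embeddings VL (edge_adj EL) VL (edge_adj EL)))"
    unfolding Onto_def Em_def Good_def
    by (intro sum.cong refl card_induced_embeddings_onto[OF finL]) auto
  finally show ?thesis unfolding Em_def Good_def induced_count_def by simp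
qed

lemma card_induced_embeddings_self_pos:
  assumes "finite VL"
  shows "card (induced_embeddings VL adj VL adj) > 0"
proof -
  have "restrict id VL \<in> induced_embeddings VL adj VL adj"
    unfolding induced_embeddings_def by (auto simp: inj_on_def)
  moreover have "finite (induced_embeddings VL adj VL adj)" unfolding induced_embeddings_def
    by (rule finite_subset[OF _ finite_PiE[OF assms, of "\<lambda>_. VL"]]) (use assms in auto)
  ultimately show ?thesis by (auto simp: card_gt_0_iff)
qed

section \<open>Linear forests and unions of cycles as lists\<close>

lemma nth_eq_in_disjoint_lists:
  assumes "\<forall>p\<in>Ps. distinct p" "\<forall>p\<in>Ps. \<forall>q\<in>Ps. p \<noteq> q \<longrightarrow> set p \<inter> set q = {}"
    and "p \<in> Ps" "q \<in> Ps" "r < length p" "r' < length q"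
  shows "p ! r = q ! r' \<longleftrightarrow> p = q \<and> r = r'"
proof
  assume eq: "p ! r = q ! r'"
  have "p ! r \<in> set p" "q ! r' \<in> set q" using assms(5,6) by simp_all
  then have "p = q" using assms(2-4) eq by auto
  then show "p = q \<and> r = r'" using assms eq nth_eq_iff_index_eq[of p r r'] by auto
qed simp

lemma doubleton_nth_eq_iff:
  assumes dist: "\<forall>p\<in>Ps. distinct p" and disj: "\<forall>p\<in>Ps. \<forall>q\<in>Ps. p \<noteq> q \<longrightarrow> set p \<inter> set q = {}"
    and p: "p \<in> Ps" "i < length p" and q: "q \<in> Ps" "j < length q"
    and p': "p' \<in> Ps" "k < length p'" "k' < length p'"
  shows "{p ! i, q ! j} = {p' ! k, p' ! k'} \<longleftrightarrow> p = p' \<and> q = p' \<and> (i = k \<and> j = k' \<or> i = k' \<and> j = k)"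
  using nth_eq_in_disjoint_lists[OF dist disj] assms by (auto simp: doubleton_eq_iff)

lemma finite_disjoint_nonempty_lists:
  assumes "finite (\<Union>p\<in>Ps. set p)" "\<forall>p\<in>Ps. p \<noteq> []" "\<forall>p\<in>Ps. \<forall>q\<in>Ps. p \<noteq> q \<longrightarrow> set p \<inter> set q = {}"
  shows "finite Ps"
proof (rule finite_imageD)
  show "finite (set ` Ps)"
    by (rule finite_subset[of _ "Pow (\<Union>p\<in>Ps. set p)"]) (use assms(1) in auto)
  show "inj_on set Ps"
  proof (rule inj_onI, rule ccontr)
    fix p q assume "p \<in> Ps" "q \<in> Ps" "set p = set q" "p \<noteq> q"
    then show False using assms(2,3) by fastforce
  qed
qed

lemma bij_betw_nth_path_vertices:
  assumes "\<forall>p\<in>Ps. distinct p" "\<forall>p\<in>Ps. \<forall>q\<in>Ps. p \<noteq> q \<longrightarrow> set p \<inter> set q = {}"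
  shows "bij_betw (\<lambda>(p, r). p ! r) (path_vertices Ps) (\<Union>p\<in>Ps. set p)"
  unfolding bij_betw_def
proof
  show "inj_on (\<lambda>(p, r). p ! r) (path_vertices Ps)"
    using nth_eq_in_disjoint_lists[OF assms] by (auto simp: inj_on_def path_vertices_def)
  show "(\<lambda>(p, r). p ! r) ` path_vertices Ps = (\<Union>p\<in>Ps. set p)"
    by (force simp: path_vertices_def in_set_conv_nth)
qed

lemma path_edge_nth_iff:
  assumes dist: "\<forall>p\<in>Ps. distinct p" and disj: "\<forall>p\<in>Ps. \<forall>q\<in>Ps. p \<noteq> q \<longrightarrow> set p \<inter> set q = {}"
    and p: "p \<in> Ps" "i < length p" and q: "q \<in> Ps" "j < length q"
  shows "{p ! i, q ! j} \<in> (\<Union>p\<in>Ps. path_edges p) \<longleftrightarrow> p = q \<and> (j = Suc i \<or> i = Suc j)"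
proof
  assume "{p ! i, q ! j} \<in> (\<Union>p\<in>Ps. path_edges p)"
  then obtain p' k where "p' \<in> Ps" "Suc k < length p'" "{p ! i, q ! j} = {p' ! k, p' ! Suc k}"
    unfolding path_edges_def by auto
  then show "p = q \<and> (j = Suc i \<or> i = Suc j)"
    using doubleton_nth_eq_iff[OF dist disj p q, of p' k "Suc k"] by auto
next
  assume "p = q \<and> (j = Suc i \<or> i = Suc j)"
  then show "{p ! i, q ! j} \<in> (\<Union>p\<in>Ps. path_edges p)"
    using p q unfolding path_edges_def by (auto simp: insert_commute)
qed

lemma linear_forest_model:
  assumes "linear_forest VL EL"
  obtains Ps :: "'a list set" where "finite Ps" "\<forall>p\<in>Ps. p \<noteq> []"
    "bij_betw (\<lambda>(p, r). p ! r) (path_vertices Ps) VL"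
    "\<forall>u\<in>path_vertices Ps. \<forall>v\<in>path_vertices Ps.
       path_adj u v \<longleftrightarrow> edge_adj EL ((\<lambda>(p, r). p ! r) u) ((\<lambda>(p, r). p ! r) v)"
proof -
  from assms obtain Ps :: "'a list set" where sg: "simple_graph VL EL"
    and ne: "\<forall>p\<in>Ps. p \<noteq> [] \<and> distinct p" and dj: "\<forall>p\<in>Ps. \<forall>q\<in>Ps. p \<noteq> q \<longrightarrow> set p \<inter> set q = {}"
    and VL: "VL = (\<Union>p\<in>Ps. set p)" and EL: "EL = (\<Union>p\<in>Ps. path_edges p)"
    unfolding linear_forest_def by blast
  have dist: "\<forall>p\<in>Ps. distinct p" using ne by blast
  have "finite Ps"
    using sg ne dj unfolding VL simple_graph_def by (intro finite_disjoint_nonempty_lists) auto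
  moreover have "bij_betw (\<lambda>(p, r). p ! r) (path_vertices Ps) VL"
    unfolding VL by (rule bij_betw_nth_path_vertices[OF dist dj])
  moreover have "path_adj u v \<longleftrightarrow> edge_adj EL ((\<lambda>(p, r). p ! r) u) ((\<lambda>(p, r). p ! r) v)"
    if uv: "u \<in> path_vertices Ps" "v \<in> path_vertices Ps" for u v
  proof -
    obtain p i q j where "u = (p, i)" "v = (q, j)" "p \<in> Ps" "i < length p" "q \<in> Ps" "j < length q"
      using uv unfolding path_vertices_def by auto
    then show ?thesis using path_edge_nth_iff[OF dist dj, of p i q j] unfolding EL path_adj_def
      by simp
  qed
  ultimately show ?thesis using that ne by blast
qed

lemma cycle_edges_conv_nth:
  assumes "c \<noteq> []"
  shows "cycle_edges c = {{c ! i, c ! (Suc i mod length c)} | i. i < length c}"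
proof
  show "cycle_edges c \<subseteq> {{c ! i, c ! (Suc i mod length c)} | i. i < length c}"
  proof
    fix e assume "e \<in> cycle_edges c"
    then consider (path) i where "Suc i < length c" "e = {c ! i, c ! Suc i}"
          | (closing) "e = {last c, hd c}"
      unfolding cycle_edges_def path_edges_def by auto
    then show "e \<in> {{c ! i, c ! (Suc i mod length c)} | i. i < length c}"
    proof cases
      case path then show ?thesis by (intro CollectI exI[of _ i]) auto
    next
      case closing
      then show ?thesis using assms
        by (intro CollectI exI[of _ "length c - 1"]) (simp add: last_conv_nth hd_conv_nth)
    qed
  qed
  show "{{c ! i, c ! (Suc i mod length c)} | i. i < length c} \<subseteq> cycle_edges c"
  proof clarify
    fix i assume i: "i < length c"
    show "{c ! i, c ! (Suc i mod length c)} \<in> cycle_edges c"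
    proof (cases "Suc i < length c")
      case True then show ?thesis unfolding cycle_edges_def path_edges_def by auto
    next
      case False
      then have "i = length c - 1" using i by simp
      then show ?thesis using i assms unfolding cycle_edges_def
        by (simp add: last_conv_nth hd_conv_nth)
    qed
  qed
qed

lemma cycle_edge_nth_iff:
  assumes dist: "\<forall>c\<in>Cs. distinct c" and disj: "\<forall>c\<in>Cs. \<forall>d\<in>Cs. c \<noteq> d \<longrightarrow> set c \<inter> set d = {}"
    and ne: "\<forall>c\<in>Cs. c \<noteq> []" and c: "c \<in> Cs" "i < length c" and d: "d \<in> Cs" "j < length d"
  shows "{c ! i, d ! j} \<in> (\<Union>c\<in>Cs. cycle_edges c)
    \<longleftrightarrow> c = d \<and> (j = Suc i mod length c \<or> i = Suc j mod length c)"
proof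
  assume "{c ! i, d ! j} \<in> (\<Union>c\<in>Cs. cycle_edges c)"
  then obtain c' k where c': "c' \<in> Cs" "k < length c'"
      "{c ! i, d ! j} = {c' ! k, c' ! (Suc k mod length c')}"
    using cycle_edges_conv_nth ne by fastforce
  moreover have "Suc k mod length c' < length c'" using c' by (intro mod_less_divisor) auto
  ultimately show "c = d \<and> (j = Suc i mod length c \<or> i = Suc j mod length c)"
    using doubleton_nth_eq_iff[OF dist disj c d, of c' k "Suc k mod length c'"] by auto
next
  assume "c = d \<and> (j = Suc i mod length c \<or> i = Suc j mod length c)"
  moreover have "c \<noteq> []" using ne c by blast
  ultimately have "{c ! i, d ! j} \<in> cycle_edges c"
    using c d unfolding cycle_edges_conv_nth[OF \<open>c \<noteq> []\<close>] by (auto simp: insert_commute)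
  then show "{c ! i, d ! j} \<in> (\<Union>c\<in>Cs. cycle_edges c)" using c by blast
qed

lemma mod_diff_eq_1_iff:
  fixes x y m :: int
  assumes "0 \<le> y" "y < m"
  shows "(y - x) mod m = 1 mod m \<longleftrightarrow> y = (x + 1) mod m"
proof -
  have "y = (x + 1) mod m \<longleftrightarrow> y mod m = (x + 1) mod m" using assms by simp
  also have "\<dots> \<longleftrightarrow> (y - x) mod m = 1 mod m" by (simp add: mod_eq_dvd_iff algebra_simps)
  finally show ?thesis ..
qed

lemma cycle_adj_iff_nth:
  assumes u: "(c, x) \<in> cycle_vertices Cs" and v: "(d, y) \<in> cycle_vertices Cs" and c3: "3 \<le> length c"
  shows "cycle_adj (c, x) (d, y)
    \<longleftrightarrow> c = d \<and> (nat y = Suc (nat x) mod length c \<or> nat x = Suc (nat y) mod length c)"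
proof (cases "c = d")
  case True
  define m where "m = int (length c)"
  have x: "0 \<le> x" "x < m" and y: "0 \<le> y" "y < m"
    using u v True unfolding cycle_vertices_def m_def by auto
  have m3: "m \<ge> 3" using c3 unfolding m_def by simp
  have natmod: "nat ((z + 1) mod m) = Suc (nat z) mod length c" if "0 \<le> z" for z
    using that unfolding m_def by (simp add: nat_mod_distrib nat_add_distrib)
  have "(x - y) mod m = (- (y - x)) mod m" by simp
  also have "\<dots> = (if (y - x) mod m = 0 then 0 else m - (y - x) mod m)" by (rule zmod_zminus1_eq_if)
  finally have "(y - x) mod m = m - 1 \<longleftrightarrow> (x - y) mod m = 1" using m3 by auto
  then have "cycle_adj (c, x) (d, y) \<longleftrightarrow> (y - x) mod m = 1 mod m \<or> (x - y) mod m = 1 mod m"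
    using True m3 unfolding cycle_adj_def m_def by auto
  also have "\<dots> \<longleftrightarrow> y = (x + 1) mod m \<or> x = (y + 1) mod m"
    using mod_diff_eq_1_iff x y by simp
  also have "\<dots> \<longleftrightarrow> nat y = nat ((x + 1) mod m) \<or> nat x = nat ((y + 1) mod m)"
    using x y m3 by (simp add: eq_nat_nat_iff)
  also have "\<dots> \<longleftrightarrow> nat y = Suc (nat x) mod length c \<or> nat x = Suc (nat y) mod length c"
    using x y by (simp add: natmod)
  finally show ?thesis using True by simp
qed (simp add: cycle_adj_def)

lemma bij_betw_nth_cycle_vertices:
  assumes "\<forall>c\<in>Cs. distinct c" "\<forall>c\<in>Cs. \<forall>d\<in>Cs. c \<noteq> d \<longrightarrow> set c \<inter> set d = {}"
  shows "bij_betw (\<lambda>(c, x). c ! nat x) (cycle_vertices Cs) (\<Union>c\<in>Cs. set c)"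
proof -
  have "bij_betw (\<lambda>(c, x). (c, nat x)) (cycle_vertices Cs) (path_vertices Cs)"
    by (rule bij_betw_byWitness[where f' = "\<lambda>(c, r). (c, int r)"])
      (auto simp: cycle_vertices_def path_vertices_def)
  from bij_betw_trans[OF this bij_betw_nth_path_vertices[OF assms]]
  show ?thesis by (simp add: comp_def case_prod_unfold)
qed

lemma cycles_model:
  assumes "cycles_at_least K V E"
  obtains Cs :: "'a list set" where "finite Cs" "\<forall>c\<in>Cs. 3 \<le> length c \<and> K \<le> length c"
    "bij_betw (\<lambda>(c, x). c ! nat x) (cycle_vertices Cs) V"
    "\<forall>u\<in>cycle_vertices Cs. \<forall>v\<in>cycle_vertices Cs.
       cycle_adj u v \<longleftrightarrow> edge_adj E ((\<lambda>(c, x). c ! nat x) u) ((\<lambda>(c, x). c ! nat x) v)"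
proof -
  from assms obtain Cs :: "'a list set" where sg: "simple_graph V E"
    and Cs: "\<forall>c\<in>Cs. distinct c \<and> length c \<ge> 3 \<and> length c \<ge> K"
    and dj: "\<forall>c\<in>Cs. \<forall>d\<in>Cs. c \<noteq> d \<longrightarrow> set c \<inter> set d = {}"
    and V: "V = (\<Union>c\<in>Cs. set c)" and E: "E = (\<Union>c\<in>Cs. cycle_edges c)"
    unfolding cycles_at_least_def by blast
  have dist: "\<forall>c\<in>Cs. distinct c" and ne: "\<forall>c\<in>Cs. c \<noteq> []" using Cs by auto
  have "finite Cs"
    using sg ne dj unfolding V simple_graph_def by (intro finite_disjoint_nonempty_lists) auto
  moreover have "bij_betw (\<lambda>(c, x). c ! nat x) (cycle_vertices Cs) V"
    unfolding V by (rule bij_betw_nth_cycle_vertices[OF dist dj])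
  moreover have "cycle_adj u v \<longleftrightarrow> edge_adj E ((\<lambda>(c, x). c ! nat x) u) ((\<lambda>(c, x). c ! nat x) v)"
    if uv: "u \<in> cycle_vertices Cs" "v \<in> cycle_vertices Cs" for u v
  proof -
    obtain c x d y where cd: "u = (c, x)" "v = (d, y)" "c \<in> Cs" "d \<in> Cs"
      and xy: "0 \<le> x" "x < int (length c)" "0 \<le> y" "y < int (length d)"
      using uv unfolding cycle_vertices_def by auto
    then show ?thesis
      using cycle_adj_iff_nth[of c x Cs d y]
          cycle_edge_nth_iff[OF dist dj ne, of c "nat x" d "nat y"] uv Cs
      unfolding E by auto
  qed
  ultimately show ?thesis using that Cs by blast
qed

section \<open>Counting induced copies of a linear forest\<close>

lemma induced_count_formula:
  assumes L: "linear_forest VL EL" and G: "cycles_at_least (card VL + 1) V E" "card V = n"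
    and Ps: "finite Ps" "\<forall>p\<in>Ps. p \<noteq> []" "bij_betw (\<lambda>(p, r). p ! r) (path_vertices Ps) VL"
      "\<forall>u\<in>path_vertices Ps. \<forall>v\<in>path_vertices Ps.
         path_adj u v \<longleftrightarrow> edge_adj EL ((\<lambda>(p, r). p ! r) u) ((\<lambda>(p, r). p ! r) v)"
  shows "int (induced_count V E VL EL * card (induced_embeddings VL (edge_adj EL) VL (edge_adj EL)))
    = cycle_placement_number length Ps (int n) * int (card (orientations Ps))"
proof -
  obtain Cs where Cs: "finite Cs" "\<forall>c\<in>Cs. 3 \<le> length c \<and> card VL + 1 \<le> length c"
    "bij_betw (\<lambda>(c, x). c ! nat x) (cycle_vertices Cs) V"
    "\<forall>u\<in>cycle_vertices Cs. \<forall>v\<in>cycle_vertices Cs.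
       cycle_adj u v \<longleftrightarrow> edge_adj E ((\<lambda>(c, x). c ! nat x) u) ((\<lambda>(c, x). c ! nat x) v)"
    using cycles_model[OF G(1)] by blast
  have "card VL = card (path_vertices Ps)" using bij_betw_same_card[OF Ps(3)] by simp
  also have "\<dots> = sum length Ps" unfolding path_vertices_def using Ps(1) by simp
  finally have k: "card VL = sum length Ps" .
  have "n = card (cycle_vertices Cs)" using bij_betw_same_card[OF Cs(3)] G(2) by simp
  also have "\<dots> = (\<Sum>c\<in>Cs. length c)" unfolding cycle_vertices_def using Cs(1) by simp
  finally have n: "int n = (\<Sum>c\<in>Cs. int (length c))" by simp
  interpret paths_in_cycles Ps Cs
    using Ps Cs k by unfold_locales auto
  have "finite VL" "finite V" using L G
    unfolding linear_forest_def cycles_at_least_def simple_graph_def by auto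
  then have "induced_count V E VL EL * card (induced_embeddings VL (edge_adj EL) VL (edge_adj EL))
      = card (induced_embeddings VL (edge_adj EL) V (edge_adj E))"
    by (simp add: induced_count_mult_automorphisms)
  also have "\<dots> = card embeddings"
    by (rule card_induced_embeddings_transfer[OF Ps(3,4) Cs(3,4)])
  also have "\<dots> = card (placements length Cs Ps) * card (orientations Ps)"
    by (rule card_embeddings)
  finally have "induced_count V E VL EL * card (induced_embeddings VL (edge_adj EL) VL (edge_adj EL))
      = card (placements length Cs Ps) * card (orientations Ps)" .
  moreover have "int (card (placements length Cs Ps)) = cycle_placement_number length Ps (int n)"
  proof -
    have "\<forall>p\<in>Ps. 1 \<le> length p" using Ps(2) by (simp add: Suc_le_eq)
    moreover have "\<forall>c\<in>Cs. int (sum length Ps) + 1 \<le> int (length c)"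
    proof
      fix c assume "c \<in> Cs"
      then have "sum length Ps + 1 \<le> length c" using Cs(2) k by auto
      then show "int (sum length Ps) + 1 \<le> int (length c)" by linarith
    qed
    ultimately show ?thesis unfolding n by (rule card_placements[OF Cs(1) Ps(1)])
  qed
  ultimately show ?thesis by simp
qed

theorem theorem3p3:
  fixes VL :: "'c set" and EL :: "'c set set"
    and V :: "'a set" and E :: "'a set set"
    and V' :: "'b set" and E' :: "'b set set"
    and k n :: nat
  assumes "linear_forest VL EL" and "card VL = k"
    and "n > 0"
    and "cycles_at_least (k + 1) V E" and "card V = n"
    and "cycles_at_least (k + 1) V' E'" and "card V' = n"
  shows "induced_count V E VL EL = induced_count V' E' VL EL"
proof -
  obtain Ps :: "'c list set" where Ps: "finite Ps" "\<forall>p\<in>Ps. p \<noteq> []"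
    "bij_betw (\<lambda>(p, r). p ! r) (path_vertices Ps) VL"
    "\<forall>u\<in>path_vertices Ps. \<forall>v\<in>path_vertices Ps.
       path_adj u v \<longleftrightarrow> edge_adj EL ((\<lambda>(p, r). p ! r) u) ((\<lambda>(p, r). p ! r) v)"
    using linear_forest_model[OF assms(1)] by blast
  define aut where "aut = card (induced_embeddings VL (edge_adj EL) VL (edge_adj EL))"
  have "finite VL" using assms(1) unfolding linear_forest_def simple_graph_def by blast
  then have "aut > 0" unfolding aut_def by (rule card_induced_embeddings_self_pos)
  have "int (induced_count V E VL EL * aut) = int (induced_count V' E' VL EL * aut)"
    using induced_count_formula[OF assms(1) _ assms(5) Ps]
        induced_count_formula[OF assms(1) _ assms(7) Ps]
      assms(2,4,6) unfolding aut_def by simp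
  then show ?thesis using \<open>aut > 0\<close> by simp
qed

end
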